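(* Let $m,n\in \mathbb{Z}$ and let $c$ be a nonzero integer with $c\mid n^2$, and let $f(X)=X^6+(n^2/c-2m)X^4+(m^2-2n)X^2+c$. Then $\mathrm{Gal}(f/\mathbb{Q})\cong C_6$ if and only if all of the following hold: (i) $-c$ is not a square of an integer; (ii) $g(X):=X^3+(n^2/c-2m)X^2+(m^2-2n)X+c$ (so that $f(X)=g(X^2)$) is irreducible over $\mathbb{Q}$; (iii) $d(m,n,c):= -(4m^3c - m^2n^2 - 18mnc + 4n^3 + 27c^2)$ is a square of an integer.
   Context: $\mathrm{Gal}(f/\mathbb{Q})$ denotes the Galois group of the splitting field of $f$ over $\mathbb{Q}$, and $C_6$ the cyclic group of order $6$. *)

theory Defs
  imports Complex_Main "HOL-Computational_Algebra.Polynomial" "HOL-Algebra.Elementary_Groups"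
begin

definition croots :: "int poly \<Rightarrow> complex set" where
  "croots p = {z. poly (map_poly of_int p) z = 0}"

definition is_csubfield :: "complex set \<Rightarrow> bool" where
  "is_csubfield K \<longleftrightarrow> 0 \<in> K \<and> 1 \<in> K \<and>
     (\<forall>x\<in>K. \<forall>y\<in>K. x + y \<in> K \<and> x - y \<in> K \<and> x * y \<in> K) \<and>
     (\<forall>x\<in>K. x \<noteq> 0 \<longrightarrow> inverse x \<in> K)"

text \<open>Splitting field of p over Q, realised inside C: the smallest subfield of C
  containing all complex roots of p (it automatically contains Q).\<close>
definition splitting_field :: "int poly \<Rightarrow> complex set" where
  "splitting_field p = \<Inter>{K. is_csubfield K \<and> croots p \<subseteq> K}"

definition field_auts :: "complex set \<Rightarrow> (complex \<Rightarrow> complex) set" where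
  "field_auts K = {\<sigma>. \<sigma> \<in> extensional K \<and> bij_betw \<sigma> K K \<and>
      (\<forall>x\<in>K. \<forall>y\<in>K. \<sigma> (x + y) = \<sigma> x + \<sigma> y \<and> \<sigma> (x * y) = \<sigma> x * \<sigma> y) \<and>
      (\<forall>q\<in>\<rat>. q \<in> K \<longrightarrow> \<sigma> q = q)}"

definition galois_group :: "int poly \<Rightarrow> (complex \<Rightarrow> complex) monoid" where
  "galois_group p =
     \<lparr>carrier = field_auts (splitting_field p),
      monoid.mult = (\<lambda>\<sigma> \<tau>. restrict (\<sigma> \<circ> \<tau>) (splitting_field p)),
      one = restrict id (splitting_field p)\<rparr>"

end

(*
  Write the roots of f as \<plusminus>b1, \<plusminus>b2, \<plusminus>b3, so that the roots of g are a_i = b_i^2. Then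
  e = -b1 b2 b3 is a square root of -c and delta = (a1 - a2)(a2 - a3)(a3 - a1) satisfies
  delta^2 c^2 = d (mn - c)^2. An automorphism maps e to \<plusminus>e and permutes the a_i, and it is
  determined by these values. Since the elements fixed by all automorphisms are rational
  (shown with the primitive element b1 + t delta), e resp. delta is fixed by all of them iff
  -c resp. d is a square.

  A generator of C6 can fix no a_i (its square would then be trivial), so g is irreducible
  and the generator permutes the a_i cyclically; its cube fixes all a_i, so it must move e,
  and delta is fixed by the generator, hence rational. Conversely, under (i)-(iii) an
  automorphism fixing one a_i fixes all of them, so |Gal| <= 6, and automorphisms moving e and
  a1 combine to one that negates e and cycles the a_i, which has order 6.
*)

theory Submission
  imports Defs "HOL-Computational_Algebra.Fundamental_Theorem_Algebra"
    "HOL-Computational_Algebra.Polynomial_Factorial" "HOL-Computational_Algebra.Field_as_Ring"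
begin

lemma csubfield_0: "is_csubfield K \<Longrightarrow> 0 \<in> K"
  and csubfield_1: "is_csubfield K \<Longrightarrow> 1 \<in> K"
  and csubfield_add: "is_csubfield K \<Longrightarrow> x \<in> K \<Longrightarrow> y \<in> K \<Longrightarrow> x + y \<in> K"
  and csubfield_diff: "is_csubfield K \<Longrightarrow> x \<in> K \<Longrightarrow> y \<in> K \<Longrightarrow> x - y \<in> K"
  and csubfield_mult: "is_csubfield K \<Longrightarrow> x \<in> K \<Longrightarrow> y \<in> K \<Longrightarrow> x * y \<in> K"
  and csubfield_inverse: "is_csubfield K \<Longrightarrow> x \<in> K \<Longrightarrow> inverse x \<in> K"
  unfolding is_csubfield_def by (simp_all, cases "x = 0", auto)

lemma csubfield_uminus: "is_csubfield K \<Longrightarrow> x \<in> K \<Longrightarrow> - x \<in> K"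
  using csubfield_diff[of K 0 x] csubfield_0[of K] by simp

lemma csubfield_divide: "is_csubfield K \<Longrightarrow> x \<in> K \<Longrightarrow> y \<in> K \<Longrightarrow> x / y \<in> K"
  by (simp add: divide_inverse csubfield_mult csubfield_inverse)

lemma csubfield_power: "is_csubfield K \<Longrightarrow> x \<in> K \<Longrightarrow> x ^ k \<in> K"
  by (induction k) (auto simp: csubfield_1 csubfield_mult)

lemma csubfield_of_int: "is_csubfield K \<Longrightarrow> of_int k \<in> K"
  by (induction k rule: int_induct[where k = 0])
    (auto simp: csubfield_0 csubfield_1 csubfield_add csubfield_diff)

lemma csubfield_numeral: "is_csubfield K \<Longrightarrow> numeral w \<in> K"
  using csubfield_of_int[of K "numeral w"] by simp

lemma csubfield_of_rat: "is_csubfield K \<Longrightarrow> of_rat q \<in> K"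
proof -
  assume K: "is_csubfield K"
  obtain a b where "q = Rat.Fract a b" "b > 0" by (cases q) auto
  then have "of_rat q = (of_int a / of_int b :: complex)" by (simp add: of_rat_rat)
  then show ?thesis using K csubfield_divide csubfield_of_int by metis
qed

lemma csubfield_Rats: "is_csubfield K \<Longrightarrow> x \<in> \<rat> \<Longrightarrow> x \<in> K"
  by (auto elim!: Rats_cases simp: csubfield_of_rat)

lemmas csubfield_closed = csubfield_0 csubfield_1 csubfield_add csubfield_diff csubfield_mult
  csubfield_inverse csubfield_uminus csubfield_divide csubfield_power csubfield_of_int
  csubfield_numeral csubfield_of_rat

lemma csubfield_poly_of_int: "is_csubfield K \<Longrightarrow> x \<in> K \<Longrightarrow> poly (map_poly of_int p) x \<in> K"
  by (induction p) (auto simp: map_poly_pCons csubfield_closed)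

lemma csubfield_poly_of_rat: "is_csubfield K \<Longrightarrow> x \<in> K \<Longrightarrow> poly (map_poly of_rat p) x \<in> K"
  by (induction p) (auto simp: map_poly_pCons csubfield_closed)

lemma csubfield_splitting_field: "is_csubfield (splitting_field p)"
  unfolding splitting_field_def is_csubfield_def by blast

lemma croots_subset_splitting_field: "croots p \<subseteq> splitting_field p"
  unfolding splitting_field_def by auto

lemma splitting_field_minimal: "is_csubfield K \<Longrightarrow> croots p \<subseteq> K \<Longrightarrow> splitting_field p \<subseteq> K"
  unfolding splitting_field_def by auto

lemma finite_croots: "p \<noteq> 0 \<Longrightarrow> finite (croots p)"
  unfolding croots_def by (rule poly_roots_finite) (simp add: map_poly_eq_0_iff)

locale field_aut =
  fixes K and \<sigma> :: "complex \<Rightarrow> complex"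
  assumes csubfield: "is_csubfield K" and aut: "\<sigma> \<in> field_auts K"
begin

lemma bij: "bij_betw \<sigma> K K" and extensional: "\<sigma> \<in> extensional K"
  using aut by (auto simp: field_auts_def)

lemma closed: "x \<in> K \<Longrightarrow> \<sigma> x \<in> K"
  using bij by (auto simp: bij_betw_def)

lemma inj: "inj_on \<sigma> K"
  using bij by (simp add: bij_betw_def)

lemma hom_add: "x \<in> K \<Longrightarrow> y \<in> K \<Longrightarrow> \<sigma> (x + y) = \<sigma> x + \<sigma> y"
  and hom_mult: "x \<in> K \<Longrightarrow> y \<in> K \<Longrightarrow> \<sigma> (x * y) = \<sigma> x * \<sigma> y"
  using aut by (auto simp: field_auts_def)

lemma fixes_Rats: "x \<in> \<rat> \<Longrightarrow> \<sigma> x = x"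
  using aut csubfield csubfield_Rats by (auto simp: field_auts_def)

lemma fixes_of_int [simp]: "\<sigma> (of_int k) = of_int k"
  and fixes_0 [simp]: "\<sigma> 0 = 0" and fixes_1 [simp]: "\<sigma> 1 = 1"
  by (auto intro!: fixes_Rats)

lemma hom_uminus: "x \<in> K \<Longrightarrow> \<sigma> (- x) = - \<sigma> x"
  using hom_mult[of "-1" x] fixes_Rats[of "-1"] csubfield by (simp add: csubfield_closed)

lemma hom_diff: "x \<in> K \<Longrightarrow> y \<in> K \<Longrightarrow> \<sigma> (x - y) = \<sigma> x - \<sigma> y"
  using hom_add[of x "-y"] hom_uminus[of y] csubfield by (simp add: csubfield_uminus)

lemma hom_inverse: "x \<in> K \<Longrightarrow> \<sigma> (inverse x) = inverse (\<sigma> x)"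
proof (cases "x = 0")
  case False
  assume x: "x \<in> K"
  have "\<sigma> x * \<sigma> (inverse x) = 1"
    using x csubfield False hom_mult[of x "inverse x"] by (simp add: csubfield_inverse)
  then show ?thesis by (simp add: inverse_unique)
qed simp

lemma hom_divide: "x \<in> K \<Longrightarrow> y \<in> K \<Longrightarrow> \<sigma> (x / y) = \<sigma> x / \<sigma> y"
  using csubfield by (simp add: divide_inverse hom_mult hom_inverse csubfield_inverse)

lemma hom_power: "x \<in> K \<Longrightarrow> \<sigma> (x ^ k) = \<sigma> x ^ k"
  using csubfield by (induction k) (auto simp: hom_mult csubfield_power)

lemma hom_poly_of_int:
  "x \<in> K \<Longrightarrow> \<sigma> (poly (map_poly of_int p) x) = poly (map_poly of_int p) (\<sigma> x)"
  using csubfield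
  by (induction p) (auto simp: map_poly_pCons hom_add hom_mult csubfield_closed csubfield_poly_of_int)

lemma maps_croots: "croots p \<subseteq> K \<Longrightarrow> x \<in> croots p \<Longrightarrow> \<sigma> x \<in> croots p"
  using hom_poly_of_int[of x p] by (auto simp: croots_def)

end

lemma field_aut_splitting_field:
  "\<sigma> \<in> field_auts (splitting_field p) \<Longrightarrow> field_aut (splitting_field p) \<sigma>"
  by (simp add: field_aut_def csubfield_splitting_field)

lemma field_auts_eqI:
  assumes "\<sigma> \<in> field_auts (splitting_field p)" "\<tau> \<in> field_auts (splitting_field p)"
    and "\<And>x. x \<in> croots p \<Longrightarrow> \<sigma> x = \<tau> x"
  shows "\<sigma> = \<tau>"
proof -
  interpret s: field_aut "splitting_field p" \<sigma> by (rule field_aut_splitting_field) fact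
  interpret t: field_aut "splitting_field p" \<tau> by (rule field_aut_splitting_field) fact
  let ?L = "splitting_field p"
  let ?E = "{x \<in> ?L. \<sigma> x = \<tau> x}"
  have L: "is_csubfield ?L" by (rule csubfield_splitting_field)
  have "is_csubfield ?E"
    unfolding is_csubfield_def using L
    by (auto simp: csubfield_closed s.hom_add t.hom_add s.hom_diff t.hom_diff s.hom_mult t.hom_mult
        s.hom_inverse t.hom_inverse)
  moreover have "croots p \<subseteq> ?E" using assms(3) croots_subset_splitting_field by auto
  ultimately have "?L \<subseteq> ?E" by (rule splitting_field_minimal)
  then show ?thesis
  proof (intro ext)
    fix x show "\<sigma> x = \<tau> x"
      using \<open>?L \<subseteq> ?E\<close> s.extensional t.extensional by (cases "x \<in> ?L") (auto simp: extensional_def)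
  qed
qed

lemma carrier_galois_group: "carrier (galois_group p) = field_auts (splitting_field p)"
  and mult_galois_group: "\<sigma> \<otimes>\<^bsub>galois_group p\<^esub> \<tau> = restrict (\<sigma> \<circ> \<tau>) (splitting_field p)"
  and one_galois_group: "\<one>\<^bsub>galois_group p\<^esub> = restrict id (splitting_field p)"
  by (simp_all add: galois_group_def)

lemma field_auts_compose:
  assumes "\<sigma> \<in> field_auts (splitting_field p)" "\<tau> \<in> field_auts (splitting_field p)"
  shows "restrict (\<sigma> \<circ> \<tau>) (splitting_field p) \<in> field_auts (splitting_field p)"
proof -
  interpret s: field_aut "splitting_field p" \<sigma> by (rule field_aut_splitting_field) fact
  interpret t: field_aut "splitting_field p" \<tau> by (rule field_aut_splitting_field) fact
  let ?L = "splitting_field p"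
  have "bij_betw (\<sigma> \<circ> \<tau>) ?L ?L" using s.bij t.bij by (rule bij_betw_trans[rotated])
  then have "bij_betw (restrict (\<sigma> \<circ> \<tau>) ?L) ?L ?L"
    by (rule bij_betw_cong[THEN iffD1, rotated]) auto
  then show ?thesis
    using csubfield_splitting_field[of p]
    by (auto simp: field_auts_def s.hom_add t.hom_add s.hom_mult t.hom_mult t.closed
        csubfield_closed s.fixes_Rats t.fixes_Rats)
qed

lemma field_auts_id: "restrict id (splitting_field p) \<in> field_auts (splitting_field p)"
  by (auto simp: field_auts_def csubfield_closed csubfield_splitting_field bij_betw_def inj_on_def)

lemma field_auts_inv:
  assumes "\<sigma> \<in> field_auts (splitting_field p)"
  shows "restrict (inv_into (splitting_field p) \<sigma>) (splitting_field p) \<in> field_auts (splitting_field p)"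
proof -
  interpret s: field_aut "splitting_field p" \<sigma> by (rule field_aut_splitting_field) fact
  let ?L = "splitting_field p"
  let ?i = "inv_into ?L \<sigma>"
  have b: "bij_betw ?i ?L ?L" using s.bij by (rule bij_betw_inv_into)
  have b': "bij_betw (restrict ?i ?L) ?L ?L"
    using b by (rule bij_betw_cong[THEN iffD1, rotated]) auto
  have iL: "x \<in> ?L \<Longrightarrow> ?i x \<in> ?L" for x using b by (auto simp: bij_betw_def)
  have si: "x \<in> ?L \<Longrightarrow> \<sigma> (?i x) = x" for x using s.bij by (meson bij_betw_inv_into_right)
  have ieq: "?i y = x" if "x \<in> ?L" "y \<in> ?L" "\<sigma> x = y" for x y
    using that by (intro inv_into_f_eq[OF s.inj])
  have hom: "?i (x + y) = ?i x + ?i y \<and> ?i (x * y) = ?i x * ?i y" if "x \<in> ?L" "y \<in> ?L" for x y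
    using that iL si csubfield_splitting_field[of p]
    by (auto intro!: ieq simp: s.hom_add s.hom_mult csubfield_closed)
  have "?i q = q" if "q \<in> \<rat>" "q \<in> ?L" for q
    using that by (intro ieq) (auto simp: s.fixes_Rats)
  then show ?thesis using b' hom csubfield_splitting_field[of p]
    by (auto simp: field_auts_def csubfield_closed)
qed

lemma group_galois_group: "group (galois_group p)"
proof (rule groupI)
  let ?L = "splitting_field p"
  let ?G = "galois_group p"
  have closed: "x t \<in> ?L" if "x \<in> carrier ?G" "t \<in> ?L" for x t
    using that field_aut.closed[OF field_aut_splitting_field, of x p] by (simp add: carrier_galois_group)
  show "x \<otimes>\<^bsub>?G\<^esub> y \<in> carrier ?G" if "x \<in> carrier ?G" "y \<in> carrier ?G" for x y
    using that field_auts_compose by (simp add: carrier_galois_group mult_galois_group)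
  show "\<one>\<^bsub>?G\<^esub> \<in> carrier ?G"
    using field_auts_id by (simp add: carrier_galois_group one_galois_group)
  show "x \<otimes>\<^bsub>?G\<^esub> y \<otimes>\<^bsub>?G\<^esub> z = x \<otimes>\<^bsub>?G\<^esub> (y \<otimes>\<^bsub>?G\<^esub> z)"
    if "x \<in> carrier ?G" "y \<in> carrier ?G" "z \<in> carrier ?G" for x y z
    unfolding mult_galois_group by (rule restrict_ext) (simp add: closed that)
  show "\<one>\<^bsub>?G\<^esub> \<otimes>\<^bsub>?G\<^esub> x = x" if "x \<in> carrier ?G" for x
  proof -
    have "x \<in> extensional ?L"
      using that field_aut.extensional[OF field_aut_splitting_field, of x p]
      by (simp add: carrier_galois_group)
    then have "restrict x ?L = x" by (rule extensional_restrict)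
    moreover have "restrict (restrict id ?L \<circ> x) ?L = restrict x ?L"
      by (rule restrict_ext) (simp add: closed that)
    ultimately show ?thesis unfolding mult_galois_group one_galois_group by simp
  qed
  show "\<exists>y\<in>carrier ?G. y \<otimes>\<^bsub>?G\<^esub> x = \<one>\<^bsub>?G\<^esub>" if "x \<in> carrier ?G" for x
  proof
    interpret s: field_aut ?L x using that by (simp add: carrier_galois_group field_aut_splitting_field)
    show "restrict (inv_into ?L x) ?L \<in> carrier ?G"
      using that field_auts_inv by (simp add: carrier_galois_group)
    show "restrict (inv_into ?L x) ?L \<otimes>\<^bsub>?G\<^esub> x = \<one>\<^bsub>?G\<^esub>"
      unfolding mult_galois_group one_galois_group
      by (rule restrict_ext) (simp add: s.closed inv_into_f_f[OF s.inj])
  qed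
qed

lemma galois_group_mult_apply:
  "x \<in> splitting_field p \<Longrightarrow> (\<sigma> \<otimes>\<^bsub>galois_group p\<^esub> \<tau>) x = \<sigma> (\<tau> x)"
  by (simp add: mult_galois_group)

lemma galois_group_one_apply: "x \<in> splitting_field p \<Longrightarrow> \<one>\<^bsub>galois_group p\<^esub> x = x"
  by (simp add: one_galois_group)

lemma galois_group_pow_apply:
  assumes "\<sigma> \<in> carrier (galois_group p)" "x \<in> splitting_field p"
  shows "(\<sigma> [^]\<^bsub>galois_group p\<^esub> (k::nat)) x = (\<sigma> ^^ k) x"
  using assms(2)
proof (induction k arbitrary: x)
  case 0
  then show ?case by (simp add: one_galois_group)
next
  case (Suc k)
  interpret s: field_aut "splitting_field p" \<sigma>
    using assms(1) by (simp add: carrier_galois_group field_aut_splitting_field)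
  show ?case using Suc s.closed by (simp add: mult_galois_group funpow_Suc_right funpow_swap1)
qed

lemma galois_group_eq_oneI:
  assumes "\<sigma> \<in> carrier (galois_group p)" "\<And>x. x \<in> croots p \<Longrightarrow> \<sigma> x = x"
  shows "\<sigma> = \<one>\<^bsub>galois_group p\<^esub>"
  unfolding one_galois_group using assms croots_subset_splitting_field
  by (intro field_auts_eqI[OF _ field_auts_id]) (auto simp: carrier_galois_group)

abbreviation rpoly :: "rat poly \<Rightarrow> complex \<Rightarrow> complex" where
  "rpoly q z \<equiv> poly (map_poly of_rat q) z"

lemma rpoly_pCons: "rpoly (pCons a p) z = of_rat a + z * rpoly p z"
  by (simp add: map_poly_pCons)

lemma rpoly_const: "rpoly [:a:] z = of_rat a"
  by (simp add: map_poly_pCons)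

lemma rpoly_add: "rpoly (p + q) z = rpoly p z + rpoly q z"
proof -
  have "map_poly (of_rat :: rat \<Rightarrow> complex) (p + q) = map_poly of_rat p + map_poly of_rat q"
    by (intro poly_eqI) (simp add: coeff_map_poly of_rat_add)
  then show ?thesis by simp
qed

lemma rpoly_diff: "rpoly (p - q) z = rpoly p z - rpoly q z"
  by (metis diff_add_cancel eq_diff_eq rpoly_add)

lemma rpoly_smult: "rpoly (smult a q) z = of_rat a * rpoly q z"
  by (induction q) (simp_all add: rpoly_pCons of_rat_mult algebra_simps)

lemma rpoly_mult: "rpoly (p * q) z = rpoly p z * rpoly q z"
  by (induction p) (simp_all add: rpoly_pCons rpoly_add rpoly_smult algebra_simps)

lemma rpoly_of_rat: "rpoly q (of_rat r) = of_rat (poly q r)"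
  by (induction q) (simp_all add: rpoly_pCons of_rat_add of_rat_mult)

lemma rpoly_of_int_poly: "rpoly (map_poly of_int p) z = poly (map_poly of_int p) z"
  by (simp add: map_poly_map_poly o_def)

lemma rpoly_pcompose: "poly (map_poly of_int p) (rpoly q z) = rpoly (pcompose (map_poly of_int p) q) z"
  by (induction p) (simp_all add: map_poly_pCons pcompose_pCons rpoly_add rpoly_mult of_rat_add)

lemma map_poly_of_rat_pderiv:
  "map_poly (of_rat :: rat \<Rightarrow> complex) (pderiv p) = pderiv (map_poly of_rat p)"
  by (intro poly_eqI) (simp add: coeff_map_poly coeff_pderiv of_rat_mult of_rat_add)

lemma irreducible_bezout:
  fixes p q :: "rat poly"
  assumes "irreducible p" "\<not> p dvd q"
  obtains u v where "u * p + v * q = 1"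
proof -
  have "is_unit (gcd p q)"
    using irreducibleD'[OF assms(1) gcd_dvd1] assms(2) by (meson dvd_trans gcd_dvd2)
  then have "gcd p q = 1" by simp
  moreover obtain u v where "bezout_coefficients p q = (u, v)" by (cases "bezout_coefficients p q")
  ultimately have "u * p + v * q = 1" using bezout_coefficients[of p q u v] by simp
  then show ?thesis by (rule that)
qed

lemma irreducible_rpoly_root_dvd_iff:
  assumes irr: "irreducible p" and root: "rpoly p z = 0"
  shows "rpoly q z = 0 \<longleftrightarrow> p dvd q"
proof
  assume q: "rpoly q z = 0"
  show "p dvd q"
  proof (rule ccontr)
    assume "\<not> p dvd q"
    then obtain u v where "u * p + v * q = 1" using irreducible_bezout[OF irr] by blast
    then have "rpoly (u * p + v * q) z = 1" by simp
    then show False using root q by (simp add: rpoly_add rpoly_mult)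
  qed
qed (use root in \<open>auto simp: rpoly_mult\<close>)

lemma degree_pos_if_irreducible: "irreducible (p :: rat poly) \<Longrightarrow> degree p > 0"
  by (metis gr0I irreducible_def is_unit_iff_degree)

lemma rsquarefree_if_irreducible:
  assumes irr: "irreducible (p :: rat poly)"
  shows "rsquarefree (map_poly (of_rat :: rat \<Rightarrow> complex) p)"
  unfolding rsquarefree_roots
proof (intro allI notI)
  fix a assume a: "rpoly p a = 0 \<and> poly (pderiv (map_poly of_rat p)) a = 0"
  then have "rpoly (pderiv p) a = 0" by (simp add: map_poly_of_rat_pderiv)
  then have "p dvd pderiv p" using irreducible_rpoly_root_dvd_iff[OF irr, of a] a by simp
  moreover have dp: "degree p > 0" using irr by (rule degree_pos_if_irreducible)
  then have "pderiv p \<noteq> 0" by (simp add: pderiv_eq_0_iff)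
  ultimately have "degree p \<le> degree (pderiv p)" by (rule dvd_imp_degree_le)
  then show False using dp by (simp add: degree_pderiv)
qed

lemma card_roots_irreducible:
  assumes irr: "irreducible (p :: rat poly)"
  shows "card {z. rpoly p z = 0} = degree p"
proof -
  let ?P = "map_poly (of_rat :: rat \<Rightarrow> complex) p"
  let ?S = "{z. poly ?P z = 0}"
  have "?P \<noteq> 0" using degree_pos_if_irreducible[OF irr] by (auto simp: map_poly_eq_0_iff)
  then have "degree ?P = degree (\<Prod>z\<in>?S. [:-z, 1:])"
    using complex_poly_decompose_rsquarefree[OF rsquarefree_if_irreducible[OF irr]]
    by (metis degree_smult_eq leading_coeff_0_iff)
  also have "\<dots> = card ?S" by (subst degree_prod_sum_eq) auto
  finally show ?thesis by (simp add: degree_map_poly)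
qed

lemma rpoly_prod_mset: "rpoly (prod_mset M) z = (\<Prod>q\<in>#M. rpoly q z)"
  by (induction M) (simp_all add: rpoly_mult)

lemma irreducible_factor_root:
  fixes F :: "rat poly"
  assumes "F \<noteq> 0" "rpoly F \<theta> = 0"
  obtains p where "irreducible p" "rpoly p \<theta> = 0"
proof -
  have "F dvd prod_mset (prime_factorization F)"
    using prod_mset_prime_factorization_weak[OF assms(1)] by (metis dvd_normalize_iff dvd_refl)
  then obtain k where "prod_mset (prime_factorization F) = F * k" by (elim dvdE)
  then have "rpoly (prod_mset (prime_factorization F)) \<theta> = 0"
    using assms(2) by (simp add: rpoly_mult)
  then have "(\<Prod>q\<in>#prime_factorization F. rpoly q \<theta>) = 0" by (simp add: rpoly_prod_mset)
  then obtain p where p: "p \<in># prime_factorization F" "rpoly p \<theta> = 0"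
    by (auto simp: prod_mset_zero_iff)
  then have "irreducible p"
    by (intro prime_elem_imp_irreducible prime_imp_prime_elem in_prime_factors_imp_prime)
  then show ?thesis using that p(2) by blast
qed

lemma rsquarefree_cubic_distinct:
  fixes x y z :: complex
  assumes "rsquarefree ([:-x, 1:] * [:-y, 1:] * [:-z, 1:])"
  shows "x \<noteq> y" "x \<noteq> z" "y \<noteq> z"
  using assms[unfolded rsquarefree_roots, rule_format, of x] assms[unfolded rsquarefree_roots, rule_format, of y]
  by (auto simp: pderiv_mult pderiv_pCons algebra_simps)

section \<open>Fields generated by one algebraic number\<close>

definition rat_adjoin :: "complex \<Rightarrow> complex set" where
  "rat_adjoin \<theta> = range (\<lambda>q. rpoly q \<theta>)"

lemma rpoly_in_rat_adjoin: "rpoly q \<theta> \<in> rat_adjoin \<theta>"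
  by (simp add: rat_adjoin_def)

lemma self_in_rat_adjoin: "\<theta> \<in> rat_adjoin \<theta>"
  using rpoly_in_rat_adjoin[of "[:0, 1:]" \<theta>] by (simp add: map_poly_pCons)

lemma csubfield_rat_adjoin:
  assumes irr: "irreducible p" and root: "rpoly p \<theta> = 0"
  shows "is_csubfield (rat_adjoin \<theta>)"
  unfolding is_csubfield_def
proof (intro conjI ballI impI)
  show "0 \<in> rat_adjoin \<theta>" "1 \<in> rat_adjoin \<theta>"
    using rpoly_in_rat_adjoin[of 0 \<theta>] rpoly_in_rat_adjoin[of 1 \<theta>] by simp_all
  fix x y assume "x \<in> rat_adjoin \<theta>" "y \<in> rat_adjoin \<theta>"
  then obtain q1 q2 where x: "x = rpoly q1 \<theta>" and y: "y = rpoly q2 \<theta>" by (auto simp: rat_adjoin_def)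
  show "x + y \<in> rat_adjoin \<theta>" "x - y \<in> rat_adjoin \<theta>" "x * y \<in> rat_adjoin \<theta>"
    using rpoly_in_rat_adjoin[of "q1 + q2"] rpoly_in_rat_adjoin[of "q1 - q2"]
      rpoly_in_rat_adjoin[of "q1 * q2"]
    by (simp_all add: x y rpoly_add rpoly_diff rpoly_mult)
next
  fix x assume "x \<in> rat_adjoin \<theta>" and x0: "x \<noteq> 0"
  then obtain q where x: "x = rpoly q \<theta>" by (auto simp: rat_adjoin_def)
  have "\<not> p dvd q" using irreducible_rpoly_root_dvd_iff[OF irr root, of q] x x0 by simp
  then obtain u v where "u * p + v * q = 1" using irreducible_bezout[OF irr] by blast
  then have "rpoly (u * p + v * q) \<theta> = 1" by simp
  then have "rpoly v \<theta> * x = 1" using root x by (simp add: rpoly_add rpoly_mult)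
  then have "inverse x = rpoly v \<theta>" by (metis inverse_unique mult.commute)
  then show "inverse x \<in> rat_adjoin \<theta>" by (simp add: rpoly_in_rat_adjoin)
qed

text \<open>If the splitting field of \<open>f\<close> is \<open>\<rat>(\<theta>)\<close>, every root \<open>\<rho>\<close> of the minimal polynomial \<open>p\<close>
  of \<open>\<theta>\<close> gives an automorphism \<open>q(\<theta>) \<mapsto> q(\<rho>)\<close>; as these are \<open>deg p\<close> many, an element fixed by
  all automorphisms is a polynomial of degree \<open>< deg p\<close> in \<open>\<theta>\<close> taking the same value at \<open>deg p\<close>
  points, hence rational.\<close>

locale primitive_element =
  fixes \<theta> :: complex and p :: "rat poly" and f :: "int poly"
  assumes irreducible: "irreducible p" and root: "rpoly p \<theta> = 0"
    and f_nonzero: "f \<noteq> 0" and in_splitting_field: "\<theta> \<in> splitting_field f"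
    and croots_subset: "croots f \<subseteq> rat_adjoin \<theta>"
begin

abbreviation "L \<equiv> splitting_field f"

lemma splitting_field_eq: "L = rat_adjoin \<theta>"
proof
  show "L \<subseteq> rat_adjoin \<theta>"
    using csubfield_rat_adjoin[OF irreducible root] croots_subset by (rule splitting_field_minimal)
  show "rat_adjoin \<theta> \<subseteq> L"
    using in_splitting_field
    by (auto simp: rat_adjoin_def intro!: csubfield_poly_of_rat csubfield_splitting_field)
qed

lemma splitting_field_elem: "x \<in> L \<Longrightarrow> \<exists>q. x = rpoly q \<theta>"
  using splitting_field_eq by (auto simp: rat_adjoin_def)

definition conj_map :: "complex \<Rightarrow> complex \<Rightarrow> complex" where
  "conj_map \<rho> x = (if x \<in> L then rpoly (SOME q. x = rpoly q \<theta>) \<rho> else undefined)"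

context
  fixes \<rho> assumes root_rho: "rpoly p \<rho> = 0"
begin

lemma rpoly_eq_iff: "rpoly q \<theta> = rpoly q' \<theta> \<longleftrightarrow> rpoly q \<rho> = rpoly q' \<rho>"
  using irreducible_rpoly_root_dvd_iff[OF irreducible root, of "q - q'"]
    irreducible_rpoly_root_dvd_iff[OF irreducible root_rho, of "q - q'"]
  by (simp add: rpoly_diff)

lemma conj_map_rpoly: "conj_map \<rho> (rpoly q \<theta>) = rpoly q \<rho>"
proof -
  have "rpoly q \<theta> = rpoly (SOME q'. rpoly q \<theta> = rpoly q' \<theta>) \<theta>" by (rule someI) (rule refl)
  then show ?thesis
    using splitting_field_eq rpoly_in_rat_adjoin by (simp add: conj_map_def rpoly_eq_iff)
qed

lemma
  assumes "x \<in> L" "y \<in> L"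
  shows conj_map_add: "conj_map \<rho> (x + y) = conj_map \<rho> x + conj_map \<rho> y"
    and conj_map_diff: "conj_map \<rho> (x - y) = conj_map \<rho> x - conj_map \<rho> y"
    and conj_map_mult: "conj_map \<rho> (x * y) = conj_map \<rho> x * conj_map \<rho> y"
proof -
  obtain q1 q2 where x: "x = rpoly q1 \<theta>" and y: "y = rpoly q2 \<theta>"
    using assms splitting_field_elem by blast
  show "conj_map \<rho> (x + y) = conj_map \<rho> x + conj_map \<rho> y"
    using conj_map_rpoly[of "q1 + q2"] by (simp add: x y conj_map_rpoly rpoly_add)
  show "conj_map \<rho> (x - y) = conj_map \<rho> x - conj_map \<rho> y"
    using conj_map_rpoly[of "q1 - q2"] by (simp add: x y conj_map_rpoly rpoly_diff)
  show "conj_map \<rho> (x * y) = conj_map \<rho> x * conj_map \<rho> y"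
    using conj_map_rpoly[of "q1 * q2"] by (simp add: x y conj_map_rpoly rpoly_mult)
qed

lemma conj_map_of_rat: "conj_map \<rho> (of_rat a) = of_rat a"
  using conj_map_rpoly[of "[:a:]"] by (simp add: rpoly_const)

lemma conj_map_Rats: "x \<in> \<rat> \<Longrightarrow> conj_map \<rho> x = x"
  by (auto elim!: Rats_cases simp: conj_map_of_rat)

lemma inj_conj_map: "inj_on (conj_map \<rho>) L"
proof
  fix x y assume "x \<in> L" "y \<in> L" and eq: "conj_map \<rho> x = conj_map \<rho> y"
  then obtain q1 q2 where "x = rpoly q1 \<theta>" "y = rpoly q2 \<theta>" using splitting_field_elem by blast
  then show "x = y" using eq by (simp add: conj_map_rpoly rpoly_eq_iff)
qed

lemma conj_map_inverse: "x \<in> L \<Longrightarrow> conj_map \<rho> (inverse x) = inverse (conj_map \<rho> x)"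
proof (cases "x = 0")
  case True
  then show ?thesis using conj_map_of_rat[of 0] by simp
next
  case False
  assume x: "x \<in> L"
  have "conj_map \<rho> (x * inverse x) = 1" using False conj_map_of_rat[of 1] by simp
  then have "conj_map \<rho> x * conj_map \<rho> (inverse x) = 1"
    using x csubfield_splitting_field by (simp add: conj_map_mult csubfield_inverse)
  then show ?thesis by (simp add: inverse_unique)
qed

lemma conj_map_croots: "x \<in> croots f \<Longrightarrow> conj_map \<rho> x \<in> croots f"
proof -
  assume x: "x \<in> croots f"
  then obtain q where q: "x = rpoly q \<theta>"
    using croots_subset_splitting_field splitting_field_elem by blast
  have "rpoly (pcompose (map_poly of_int f) q) \<theta> = 0"
    using x q by (simp add: croots_def rpoly_pcompose)
  then have "rpoly (pcompose (map_poly of_int f) q) \<rho> = 0"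
    using rpoly_eq_iff[of _ 0] by simp
  then show ?thesis by (simp add: croots_def q conj_map_rpoly rpoly_pcompose)
qed

lemma conj_map_image_croots: "conj_map \<rho> ` croots f = croots f"
proof (rule endo_inj_surj)
  show "finite (croots f)" using f_nonzero by (rule finite_croots)
  show "conj_map \<rho> ` croots f \<subseteq> croots f" using conj_map_croots by blast
  show "inj_on (conj_map \<rho>) (croots f)"
    using inj_conj_map croots_subset_splitting_field inj_on_subset by blast
qed

lemma conj_map_field_aut: "conj_map \<rho> \<in> field_auts L"
proof -
  have K: "is_csubfield L" by (rule csubfield_splitting_field)
  have "is_csubfield {x \<in> L. conj_map \<rho> x \<in> L}"
    unfolding is_csubfield_def using K
    by (auto simp: csubfield_closed conj_map_Rats conj_map_add conj_map_diff conj_map_mult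
        conj_map_inverse)
  moreover have "croots f \<subseteq> {x \<in> L. conj_map \<rho> x \<in> L}"
    using croots_subset_splitting_field conj_map_croots by blast
  ultimately have into: "conj_map \<rho> ` L \<subseteq> L"
    using splitting_field_minimal by blast
  have "is_csubfield (conj_map \<rho> ` L)"
    unfolding is_csubfield_def
  proof (intro conjI ballI impI)
    show "0 \<in> conj_map \<rho> ` L"
      using K conj_map_Rats[of 0] by (intro rev_image_eqI[of 0]) (auto simp: csubfield_0)
    show "1 \<in> conj_map \<rho> ` L"
      using K conj_map_Rats[of 1] by (intro rev_image_eqI[of 1]) (auto simp: csubfield_1)
    fix x y assume "x \<in> conj_map \<rho> ` L" "y \<in> conj_map \<rho> ` L"
    then obtain u v where u: "u \<in> L" "x = conj_map \<rho> u" and v: "v \<in> L" "y = conj_map \<rho> v" by blast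
    show "x + y \<in> conj_map \<rho> ` L" using u v K by (metis conj_map_add csubfield_add image_eqI)
    show "x - y \<in> conj_map \<rho> ` L" using u v K by (metis conj_map_diff csubfield_diff image_eqI)
    show "x * y \<in> conj_map \<rho> ` L" using u v K by (metis conj_map_mult csubfield_mult image_eqI)
  next
    fix x assume "x \<in> conj_map \<rho> ` L"
    then obtain u where u: "u \<in> L" "x = conj_map \<rho> u" by blast
    show "inverse x \<in> conj_map \<rho> ` L" using u K by (metis conj_map_inverse csubfield_inverse image_eqI)
  qed
  moreover have "croots f \<subseteq> conj_map \<rho> ` L"
    using conj_map_image_croots croots_subset_splitting_field by blast
  ultimately have "L \<subseteq> conj_map \<rho> ` L" by (rule splitting_field_minimal)
  with into have "bij_betw (conj_map \<rho>) L L" using inj_conj_map by (simp add: bij_betw_def)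
  moreover have "conj_map \<rho> \<in> extensional L" by (simp add: conj_map_def extensional_def)
  ultimately show ?thesis
    by (auto simp: field_auts_def conj_map_add conj_map_mult conj_map_Rats)
qed

end

lemma fixed_imp_Rats:
  assumes x: "x \<in> L" and fixed: "\<And>\<sigma>. \<sigma> \<in> field_auts L \<Longrightarrow> \<sigma> x = x"
  shows "x \<in> \<rat>"
proof -
  obtain q where q: "x = rpoly q \<theta>" using x splitting_field_elem by blast
  define r where "r = q mod p"
  have "q = p * (q div p) + r" by (simp add: r_def)
  then have xr: "x = rpoly r \<theta>" using q root by (metis add_0 mult_zero_left rpoly_add rpoly_mult)
  define R where "R = map_poly (of_rat :: rat \<Rightarrow> complex) r - [:x:]"
  have "poly R \<rho> = 0" if "rpoly p \<rho> = 0" for \<rho>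
    using fixed[OF conj_map_field_aut[OF that]] conj_map_rpoly[OF that] xr by (simp add: R_def)
  then have roots: "{z. rpoly p z = 0} \<subseteq> {z. poly R z = 0}" by blast
  have dp: "degree p > 0" using irreducible by (rule degree_pos_if_irreducible)
  then have "p \<noteq> 0" by auto
  then have "degree r < degree p \<or> r = 0" unfolding r_def using degree_mod_less' by blast
  then have dR: "degree R < degree p"
    using degree_diff_le_max[of "map_poly of_rat r" "[:x:]"] dp by (auto simp: R_def degree_map_poly)
  have "R = 0"
  proof (rule ccontr)
    assume "R \<noteq> 0"
    then have "card {z. rpoly p z = 0} \<le> card {z. poly R z = 0}"
      using roots by (intro card_mono poly_roots_finite)
    also have "\<dots> \<le> degree R" using \<open>R \<noteq> 0\<close> by (rule card_poly_roots_bound)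
    finally show False using card_roots_irreducible[OF irreducible] dR by simp
  qed
  then have "map_poly (of_rat :: rat \<Rightarrow> complex) r = [:x:]" by (simp add: R_def)
  then have "coeff (map_poly (of_rat :: rat \<Rightarrow> complex) r) 0 = x" by simp
  then have "x = of_rat (coeff r 0)" by (simp add: coeff_map_poly)
  then show ?thesis by simp
qed

end

lemma rpoly_shift_quadratic:
  assumes y2: "y^2 = of_rat D"
  shows "\<exists>A B. \<forall>z. rpoly P (z + y) = rpoly A z + y * rpoly B z \<and>
                     rpoly P (z - y) = rpoly A z - y * rpoly B z"
proof (induction P)
  case 0
  show ?case by (intro exI[of _ 0]) simp
next
  case (pCons a P)
  then obtain A B where plus: "\<And>z. rpoly P (z + y) = rpoly A z + y * rpoly B z"
    and minus: "\<And>z. rpoly P (z - y) = rpoly A z - y * rpoly B z"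
    by blast
  define A' where "A' = [:a:] + pCons 0 A + smult D B"
  define B' where "B' = pCons 0 B + A"
  have A': "rpoly A' z = of_rat a + z * rpoly A z + y^2 * rpoly B z" for z
    by (simp add: A'_def rpoly_pCons rpoly_add rpoly_smult rpoly_const y2)
  have B': "rpoly B' z = z * rpoly B z + rpoly A z" for z
    by (simp add: B'_def rpoly_pCons rpoly_add)
  have "rpoly (pCons a P) (z + y) = rpoly A' z + y * rpoly B' z \<and>
        rpoly (pCons a P) (z - y) = rpoly A' z - y * rpoly B' z" for z
    unfolding rpoly_pCons plus minus A' B' by (simp add: algebra_simps power2_eq_square)
  then show ?case by blast
qed

lemma rpoly_shifts_nonzero:
  assumes "P \<noteq> 0"
  obtains z where "rpoly P (z - y) \<noteq> 0" "rpoly P (z + y) \<noteq> 0"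
proof -
  have "finite ((\<lambda>x. x + y) ` {z. rpoly P z = 0} \<union> (\<lambda>x. x - y) ` {z. rpoly P z = 0})"
    using assms by (simp add: poly_roots_finite map_poly_eq_0_iff)
  then obtain z where "z \<notin> (\<lambda>x. x + y) ` {z. rpoly P z = 0} \<union> (\<lambda>x. x - y) ` {z. rpoly P z = 0}"
    using ex_new_if_finite[OF infinite_UNIV_char_0] by blast
  then have "rpoly P (z - y) \<noteq> 0" "rpoly P (z + y) \<noteq> 0" by (auto simp: image_iff)
  then show ?thesis by (rule that)
qed

lemma primitive_element_quadratic:
  fixes P :: "rat poly"
  assumes P: "P \<noteq> 0" and root: "rpoly P b = 0" and y2: "y^2 = of_rat D"
    and not_root: "rpoly P (b + 2 * y) \<noteq> 0"
  obtains p where "irreducible p" "rpoly p (b + y) = 0"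
    "b \<in> rat_adjoin (b + y)" "y \<in> rat_adjoin (b + y)"
proof -
  obtain A B where AB: "\<And>z. rpoly P (z + y) = rpoly A z + y * rpoly B z \<and>
                             rpoly P (z - y) = rpoly A z - y * rpoly B z"
    using rpoly_shift_quadratic[OF y2, of P] by blast
  define \<theta> where "\<theta> = b + y"
  have minus: "rpoly A \<theta> - y * rpoly B \<theta> = 0"
    using AB[of \<theta>] root by (simp add: \<theta>_def)
  have plus: "rpoly A \<theta> + y * rpoly B \<theta> \<noteq> 0"
    using AB[of \<theta>] not_root by (simp add: \<theta>_def algebra_simps mult_2)
  text \<open>\<open>F(z) = P(z - y) P(z + y)\<close> has rational coefficients and the root \<open>\<theta>\<close>.\<close>
  define F where "F = A * A - smult D (B * B)"
  have F: "rpoly F z = rpoly P (z - y) * rpoly P (z + y)" for z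
  proof -
    have "rpoly F z = rpoly A z * rpoly A z - y^2 * (rpoly B z * rpoly B z)"
      by (simp add: F_def rpoly_diff rpoly_mult rpoly_smult y2)
    also have "\<dots> = (rpoly A z - y * rpoly B z) * (rpoly A z + y * rpoly B z)"
      by (simp add: algebra_simps power2_eq_square)
    finally show ?thesis by (simp only: AB)
  qed
  obtain z where "rpoly P (z - y) \<noteq> 0" "rpoly P (z + y) \<noteq> 0" using rpoly_shifts_nonzero[OF P] .
  then have "F \<noteq> 0" using F[of z] by auto
  moreover have "rpoly F \<theta> = 0" using F[of \<theta>] AB[of \<theta>] minus by simp
  ultimately obtain p where p: "irreducible p" "rpoly p \<theta> = 0" by (rule irreducible_factor_root)
  have K: "is_csubfield (rat_adjoin \<theta>)" by (rule csubfield_rat_adjoin[OF p])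
  have "rpoly B \<theta> \<noteq> 0" using minus plus by auto
  then have "y = rpoly A \<theta> / rpoly B \<theta>" using minus by (simp add: field_simps)
  then have y: "y \<in> rat_adjoin \<theta>" using K by (simp add: csubfield_divide rpoly_in_rat_adjoin)
  then have "b \<in> rat_adjoin \<theta>"
    using K self_in_rat_adjoin[of \<theta>] csubfield_diff[of _ \<theta> y] by (simp add: \<theta>_def)
  with p y show ?thesis using that by (simp add: \<theta>_def)
qed

lemma (in group) pow_eq_one_imp_pow_mod:
  assumes "x \<in> carrier G" "x [^] n = \<one>"
  shows "x [^] (k mod n) = x [^] (k::nat)"
proof -
  have "x [^] k = x [^] (n * (k div n)) \<otimes> x [^] (k mod n)"
    using assms(1) by (simp add: nat_pow_mult)
  also have "x [^] (n * (k div n)) = \<one>"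
    using assms by (simp flip: nat_pow_pow)
  finally show ?thesis using assms(1) by simp
qed

lemma (in group) inj_on_pow_lessThan:
  assumes "x \<in> carrier G" "\<And>j::nat. x [^] j = \<one> \<longleftrightarrow> n dvd j"
  shows "inj_on (\<lambda>j::nat. x [^] j) {..<n}"
proof -
  have "i = j" if "i < n" "j < n" "i \<le> j" "x [^] i = x [^] j" for i j :: nat
  proof -
    have "x [^] i \<otimes> x [^] (j - i) = x [^] j"
      using that(3) assms(1) by (simp add: nat_pow_mult)
    then have "x [^] i \<otimes> x [^] (j - i) = x [^] i" using that(4) by simp
    then have "n dvd j - i" using assms by simp
    then show "i = j" using that by (auto dest: dvd_imp_le)
  qed
  then show ?thesis unfolding inj_on_def by (metis lessThan_iff nat_le_linear)
qed

lemma (in group) iso_integer_mod_groupI: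
  assumes fin: "finite (carrier G)" and card: "card (carrier G) \<le> n"
    and x: "x \<in> carrier G" and ord: "\<And>j::nat. x [^] j = \<one> \<longleftrightarrow> n dvd j"
  shows "G \<cong> integer_mod_group n"
proof -
  let ?Z = "integer_mod_group n"
  have "0 < card (carrier G)" using fin one_closed by (auto simp: card_gt_0_iff)
  then have "n \<noteq> 0" using card by linarith
  then have carrier_Z: "carrier ?Z = int ` {..<n}"
    by (auto simp: carrier_integer_mod_group image_iff intro!: bexI[where x = "nat _"])
  define \<phi> where "\<phi> z = x [^] nat z" for z :: int
  have "\<phi> \<in> hom ?Z G"
  proof (rule homI)
    fix a b assume "a \<in> carrier ?Z" "b \<in> carrier ?Z"
    then obtain i j where "a = int i" "b = int j" using carrier_Z by auto
    then show "\<phi> (a \<otimes>\<^bsub>?Z\<^esub> b) = \<phi> a \<otimes> \<phi> b"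
      using pow_eq_one_imp_pow_mod[OF x, of n "i + j"] ord[of n] x
      by (simp add: \<phi>_def nat_mod_distrib nat_pow_mult flip: of_nat_add)
  qed (use x in \<open>simp add: \<phi>_def\<close>)
  moreover have "bij_betw \<phi> (carrier ?Z) (carrier G)"
  proof -
    have img: "\<phi> ` carrier ?Z = (\<lambda>j. x [^] j) ` {..<n}"
      by (simp add: carrier_Z image_image \<phi>_def)
    have inj: "inj_on (\<lambda>j::nat. x [^] j) {..<n}" by (rule inj_on_pow_lessThan[OF x ord])
    have sub: "(\<lambda>j. x [^] j) ` {..<n} \<subseteq> carrier G" using x by auto
    then have "card ((\<lambda>j. x [^] j) ` {..<n}) = card (carrier G)"
      using card_image[OF inj] card_mono[OF fin sub] card by simp
    then have "(\<lambda>j. x [^] j) ` {..<n} = carrier G" by (rule card_subset_eq[OF fin sub])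
    moreover have "inj_on \<phi> (carrier ?Z)"
      using inj by (auto simp: carrier_Z inj_on_def \<phi>_def)
    ultimately show ?thesis using img by (simp add: bij_betw_def)
  qed
  ultimately have "?Z \<cong> G" by (auto intro: is_isoI isoI)
  then show ?thesis by (rule group.iso_sym[OF group_integer_mod_group])
qed

lemma (in group) iso_integer_mod_groupD:
  assumes iso: "G \<cong> integer_mod_group n" and n: "n > 0"
  obtains x where "x \<in> carrier G" "\<And>j::nat. x [^] j = \<one> \<longleftrightarrow> n dvd j"
    "carrier G = (\<lambda>j. x [^] j) ` {..<n}"
proof -
  let ?Z = "integer_mod_group n"
  obtain \<psi> where \<psi>: "\<psi> \<in> iso ?Z G"
    using group.iso_sym[OF is_group iso] by (auto simp: is_iso_def)
  interpret \<psi>: group_hom ?Z G \<psi>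
    using \<psi> by (simp add: group_hom_def group_hom_axioms_def iso_def is_group)
  have carrier_Z: "carrier ?Z = int ` {..<n}"
    using n by (auto simp: carrier_integer_mod_group image_iff intro!: bexI[where x = "nat _"])
  define g where "g = 1 mod int n"
  have g: "g \<in> carrier ?Z" using n by (simp add: g_def carrier_integer_mod_group)
  have pow: "\<psi> g [^] j = \<psi> (int (j mod n))" for j :: nat
    using \<psi>.hom_nat_pow[OF g, of j] by (simp add: g_def mod_mult_right_eq zmod_int)
  have inj: "inj_on \<psi> (carrier ?Z)" using \<psi> by (simp add: iso_def bij_betw_def)
  show ?thesis
  proof
    show "\<psi> g \<in> carrier G" using g by simp
    show "\<psi> g [^] j = \<one> \<longleftrightarrow> n dvd j" for j :: nat
    proof -
      have "int (j mod n) \<in> carrier ?Z" using n by (simp add: carrier_Z)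
      then have "\<psi> (int (j mod n)) = \<psi> 0 \<longleftrightarrow> int (j mod n) = 0"
        using inj_on_eq_iff[OF inj] by simp
      then show ?thesis using \<psi>.hom_one by (simp add: pow dvd_eq_mod_eq_0)
    qed
    have "carrier G = \<psi> ` carrier ?Z" using \<psi> by (simp add: iso_def bij_betw_def)
    also have "\<dots> = (\<lambda>j. \<psi> g [^] j) ` {..<n}"
      unfolding carrier_Z image_image by (intro image_cong) (simp_all add: pow)
    finally show "carrier G = (\<lambda>j. \<psi> g [^] j) ` {..<n}" .
  qed
qed

lemma inj_on_three_fixpoint:
  assumes inj: "inj_on s S" and S: "{x, y, z} \<subseteq> S" and maps: "s ` {x, y, z} \<subseteq> {x, y, z}"
    and fixed: "s x = x"
  shows "s (s y) = y \<and> s (s z) = z"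
proof -
  have eq: "a = b" if "a \<in> S" "b \<in> S" "s a = s b" for a b using inj that by (auto dest: inj_onD)
  have "s (s u) = u" if u: "u \<in> {y, z}" and v: "v \<in> {y, z}" "{u, v} = {y, z}" for u v
  proof -
    have uv: "u \<in> S" "v \<in> S" "s u \<in> {x, u, v}" "s v \<in> {x, u, v}" and "x \<in> S"
      using S maps u v by auto
    then consider "s u = x" | "s u = u" | "s u = v" by blast
    then show ?thesis
    proof cases
      case 1
      then show ?thesis using eq[of u x] uv \<open>x \<in> S\<close> fixed by simp
    next
      case 3
      from uv(4) consider "s v = x" | "s v = u" | "s v = v" by blast
      then show ?thesis
      proof cases
        case 1
        then have "v = x" using eq[of v x] uv \<open>x \<in> S\<close> fixed by simp
        then show ?thesis using \<open>s u = v\<close> eq[of u x] uv \<open>x \<in> S\<close> fixed by simp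
      next
        case 3
        then have "v = u" using eq[of v u] uv \<open>s u = v\<close> by simp
        then show ?thesis using \<open>s u = v\<close> by simp
      qed (use \<open>s u = v\<close> in simp)
    qed simp
  qed
  then show ?thesis by blast
qed

lemma inj_on_three_no_fixpoint:
  assumes inj: "inj_on s S" and S: "x \<in> S" "y \<in> S" "z \<in> S"
    and distinct: "x \<noteq> y" "x \<noteq> z" "y \<noteq> z"
    and maps: "s x \<in> {x, y, z}" "s y \<in> {x, y, z}" "s z \<in> {x, y, z}"
    and moved: "s x \<noteq> x" "s y \<noteq> y" "s z \<noteq> z"
  shows "(s x = y \<and> s y = z \<and> s z = x) \<or> (s x = z \<and> s y = x \<and> s z = y)"
proof -
  have neq: "s a \<noteq> s b" if "a \<in> S" "b \<in> S" "a \<noteq> b" for a b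
    using inj that by (auto dest: inj_onD)
  have "s x \<noteq> s y" "s x \<noteq> s z" "s y \<noteq> s z"
    using neq S distinct by auto
  then show ?thesis using maps moved by auto
qed

lemma neg_eq_self_iff: "- w = w \<longleftrightarrow> (w :: 'a :: field_char_0) = 0"
proof
  assume "- w = w"
  then have "2 * w = 0" by (metis add_eq_0_iff mult_2 neg_eq_iff_add_eq_0)
  then show "w = 0" by simp
qed simp

lemma sign_changes_trivial:
  fixes b1 b2 b3 s1 s2 s3 :: complex
  assumes "s1 = b1 \<or> s1 = - b1" "s2 = b2 \<or> s2 = - b2" "s3 = b3 \<or> s3 = - b3"
    and "s1 * s2 * s3 = b1 * b2 * b3" "s1 + s2 + s3 = b1 + b2 + b3"
    and "b1 * b2 * b3 \<noteq> 0" "b1 + b2 \<noteq> 0" "b1 + b3 \<noteq> 0" "b2 + b3 \<noteq> 0"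
  shows "s1 = b1 \<and> s2 = b2 \<and> s3 = b3"
proof -
  have "2 * (b1 + b2) \<noteq> 0" "2 * (b1 + b3) \<noteq> 0" "2 * (b2 + b3) \<noteq> 0"
    using assms(7-9) by (simp_all only: mult_eq_0_iff) simp_all
  then show ?thesis using assms(1-6)
    by (elim disjE) (auto simp: neg_eq_self_iff, auto simp: algebra_simps neg_eq_self_iff simp flip: mult_2)
qed

lemma int_square_if_Rats_sqrt:
  fixes z :: int and x :: complex
  assumes "x \<in> \<rat>" "x^2 = of_int z"
  shows "\<exists>k. z = k^2"
proof -
  obtain r where "x = of_rat r" using assms(1) Rats_cases by blast
  then have r2: "r^2 = of_int z" using assms(2) by (metis of_rat_eq_iff of_rat_of_int_eq of_rat_power)
  obtain a b where q: "quotient_of r = (a, b)" by (cases "quotient_of r")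
  have b0: "b > 0" and cop: "coprime a b" and rab: "r = of_int a / of_int b"
    using q quotient_of_denom_pos quotient_of_coprime quotient_of_div by blast+
  have "of_int (a^2) = (of_int (z * b^2) :: rat)"
    using r2 b0 by (simp add: rab power_divide field_simps)
  then have ab: "a^2 = z * b^2" by (simp only: of_int_eq_iff)
  then have "b dvd a^2" by simp
  moreover have "coprime b (a^2)" using cop by (simp add: coprime_commute)
  ultimately have "is_unit b" using coprime_common_divisor[of b "a^2" b] by simp
  then have "b = 1" using b0 by (simp add: zdvd1_eq)
  then show ?thesis using ab by (intro exI[of _ a]) simp
qed

section \<open>The sextic \<open>f(X) = g(X\<^sup>2)\<close>\<close>

text \<open>The \<open>b\<^sub>i\<close> are the roots of \<open>X\<^sup>3 + (n/e) X\<^sup>2 - m X + e\<close> for a square root \<open>e\<close> of \<open>-c\<close>.\<close>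

lemma sextic_parametrisation:
  fixes m n c :: int
  assumes c: "c \<noteq> 0"
  obtains b1 b2 b3 :: complex where "of_int c = - ((b1 * b2 * b3)^2)"
    "of_int m = - (b1 * b2 + b1 * b3 + b2 * b3)" "of_int n = b1 * b2 * b3 * (b1 + b2 + b3)"
proof -
  define e where "e = csqrt (- of_int c)"
  have e2: "e^2 = - of_int c" by (simp add: e_def)
  have e0: "e \<noteq> 0" using e2 c by auto
  define h where "h = [:e, - of_int m, of_int n / e, 1:]"
  obtain r where r: "smult (lead_coeff h) (\<Prod>i<degree h. [:-r i, 1:]) = h"
    by (rule complex_poly_decompose')
  have "h = [:-r 0, 1:] * [:-r 1, 1:] * [:-r 2, 1:]"
    using r by (simp add: h_def lessThan_Suc eval_nat_numeral mult_ac)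
  also have "\<dots> = [:- (r 0 * r 1 * r 2), r 0 * r 1 + r 0 * r 2 + r 1 * r 2, - (r 0 + r 1 + r 2), 1:]"
    by (simp add: algebra_simps)
  finally have "e = - (r 0 * r 1 * r 2) \<and> - of_int m = r 0 * r 1 + r 0 * r 2 + r 1 * r 2 \<and>
      of_int n / e = - (r 0 + r 1 + r 2)"
    unfolding h_def by (simp only: pCons_eq_iff) blast
  then have e: "e = - (r 0 * r 1 * r 2)" and m: "- of_int m = r 0 * r 1 + r 0 * r 2 + r 1 * r 2"
    and n: "of_int n / e = - (r 0 + r 1 + r 2)"
    by blast+
  show ?thesis
  proof
    show "of_int c = - ((r 0 * r 1 * r 2)^2)" using e2 e by (simp add: power2_eq_square)
    show "of_int m = - (r 0 * r 1 + r 0 * r 2 + r 1 * r 2)" using arg_cong[OF m, of uminus] by simp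
    have "of_int n = (- (r 0 + r 1 + r 2)) * e" using n e0 by (simp add: divide_eq_eq)
    then show "of_int n = r 0 * r 1 * r 2 * (r 0 + r 1 + r 2)" by (simp add: e algebra_simps)
  qed
qed

locale sextic =
  fixes m n c :: int and b1 b2 b3 :: complex
  assumes c_nonzero: "c \<noteq> 0" and c_dvd: "c dvd n^2"
    and c_eq: "of_int c = - ((b1 * b2 * b3)^2)"
    and m_eq: "of_int m = - (b1 * b2 + b1 * b3 + b2 * b3)"
    and n_eq: "of_int n = b1 * b2 * b3 * (b1 + b2 + b3)"
begin

definition "f = [:c, 0, m ^ 2 - 2 * n, 0, n ^ 2 div c - 2 * m, 0, 1:]"
definition "g = [:c, m ^ 2 - 2 * n, n ^ 2 div c - 2 * m, 1:]"
definition "d = - (4 * m ^ 3 * c - m ^ 2 * n ^ 2 - 18 * m * n * c + 4 * n ^ 3 + 27 * c ^ 2)"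

definition "a1 = b1^2"
definition "a2 = b2^2"
definition "a3 = b3^2"
definition "e = - (b1 * b2 * b3)"
definition "\<delta> = (a1 - a2) * (a2 - a3) * (a3 - a1)"

abbreviation "L \<equiv> splitting_field f"
abbreviation "G \<equiv> galois_group f"
abbreviation "gQ \<equiv> map_poly (of_int :: int \<Rightarrow> rat) g"

lemma b_nonzero: "b1 \<noteq> 0" "b2 \<noteq> 0" "b3 \<noteq> 0"
  using c_nonzero c_eq by auto

lemma e_nonzero: "e \<noteq> 0"
  using b_nonzero by (simp add: e_def)

lemma e_squared: "e^2 = - of_int c"
  using c_eq by (simp add: e_def power2_eq_square)

lemma of_int_n_squared_div_c: "of_int (n^2 div c) = - ((b1 + b2 + b3)^2)"
proof -
  have "of_int (n^2 div c) * of_int c = (of_int n :: complex)^2"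
    using c_dvd by (metis dvd_div_mult_self of_int_mult of_int_power)
  then have "(of_int (n^2 div c) + (b1 + b2 + b3)^2) * (b1 * b2 * b3)^2 = 0"
    unfolding c_eq n_eq by algebra
  then show ?thesis using b_nonzero by (simp add: eq_neg_iff_add_eq_0)
qed

lemma poly_f: "poly (map_poly of_int f) z = (z^2 - a1) * (z^2 - a2) * (z^2 - a3)"
proof -
  have "poly (map_poly of_int f) z = of_int c + z^2 * (of_int (m^2 - 2 * n) +
      z^2 * (of_int (n^2 div c - 2 * m) + z^2))"
    by (simp add: f_def map_poly_pCons algebra_simps power2_eq_square)
  also have "\<dots> = (z^2 - a1) * (z^2 - a2) * (z^2 - a3)"
    unfolding of_int_diff of_int_mult of_int_power of_int_numeral of_int_n_squared_div_c
      c_eq m_eq n_eq a1_def a2_def a3_def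
    by algebra
  finally show ?thesis .
qed

lemma poly_g: "poly (map_poly of_int g) z = (z - a1) * (z - a2) * (z - a3)"
proof -
  have "poly (map_poly of_int g) z = of_int c + z * (of_int (m^2 - 2 * n) +
      z * (of_int (n^2 div c - 2 * m) + z))"
    by (simp add: g_def map_poly_pCons algebra_simps)
  also have "\<dots> = (z - a1) * (z - a2) * (z - a3)"
    unfolding of_int_diff of_int_mult of_int_power of_int_numeral of_int_n_squared_div_c
      c_eq m_eq n_eq a1_def a2_def a3_def
    by algebra
  finally show ?thesis .
qed

lemma croots_f: "croots f = {b1, -b1, b2, -b2, b3, -b3}"
proof -
  have "z^2 - b^2 = (z - b) * (z + b)" for z b :: complex
    by (simp add: algebra_simps power2_eq_square)
  then show ?thesis
    unfolding croots_def poly_f a1_def a2_def a3_def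
    by (auto simp: eq_neg_iff_add_eq_0 add.commute)
qed

lemma f_nonzero: "f \<noteq> 0"
  by (simp add: f_def)

lemma degree_gQ: "degree gQ = 3"
  by (simp add: g_def degree_map_poly)

lemma sum_squares: "a1 + a2 + a3 = of_int (2 * m - n^2 div c)"
  unfolding of_int_diff of_int_mult of_int_numeral of_int_n_squared_div_c m_eq a1_def a2_def a3_def
  by algebra

lemma sum_products_squares: "a1 * a2 + a1 * a3 + a2 * a3 = of_int (m^2 - 2 * n)"
  unfolding of_int_diff of_int_mult of_int_power of_int_numeral m_eq n_eq a1_def a2_def a3_def
  by algebra

lemma e_times: "e * (b1 * (a1 - of_int m)) = of_int c - of_int n * a1"
  unfolding e_def c_eq m_eq n_eq a1_def by algebra

lemma sum_roots: "b1 + b2 + b3 = - of_int n / e"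
  using n_eq e_nonzero by (simp add: e_def field_simps)

text \<open>\<open>\<delta>\<close> is a square root of the discriminant of \<open>g\<close>.\<close>

lemma delta_squared: "\<delta>^2 * (of_int c)^2 = of_int d * (of_int m * of_int n - of_int c)^2"
  unfolding d_def \<delta>_def of_int_diff of_int_mult of_int_power of_int_minus of_int_add of_int_numeral
    c_eq m_eq n_eq a1_def a2_def a3_def
  by algebra

lemma delta_squared_Rats: "\<delta>^2 \<in> \<rat>"
proof -
  have "\<delta>^2 = of_int d * (of_int m * of_int n - of_int c)^2 / (of_int c)^2"
    using delta_squared c_nonzero by (simp add: field_simps)
  then show ?thesis by simp
qed

lemma in_splitting_field:
  "b1 \<in> L" "b2 \<in> L" "b3 \<in> L" "e \<in> L" "a1 \<in> L" "a2 \<in> L" "a3 \<in> L" "\<delta> \<in> L"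
proof -
  have K: "is_csubfield L" by (rule csubfield_splitting_field)
  show b: "b1 \<in> L" "b2 \<in> L" "b3 \<in> L"
    using croots_subset_splitting_field[of f] croots_f by auto
  show "e \<in> L" "a1 \<in> L" "a2 \<in> L" "a3 \<in> L" "\<delta> \<in> L"
    unfolding e_def \<delta>_def a1_def a2_def a3_def using b K by (simp_all add: csubfield_closed)
qed


lemma map_poly_g_factors:
  "map_poly (of_int :: int \<Rightarrow> complex) g = [:-a1, 1:] * [:-a2, 1:] * [:-a3, 1:]"
  by (rule poly_eq_poly_eq_iff[THEN iffD1]) (simp add: fun_eq_iff poly_g algebra_simps)

lemma squares_distinct:
  assumes "irreducible gQ"
  shows "a1 \<noteq> a2" "a1 \<noteq> a3" "a2 \<noteq> a3"
proof -
  have "map_poly (of_rat :: rat \<Rightarrow> complex) gQ = map_poly of_int g"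
    by (simp add: map_poly_map_poly o_def)
  then have "rsquarefree ([:-a1, 1:] * [:-a2, 1:] * [:-a3, 1:])"
    using rsquarefree_if_irreducible[OF assms] by (simp only: map_poly_g_factors)
  then show "a1 \<noteq> a2" "a1 \<noteq> a3" "a2 \<noteq> a3" by (rule rsquarefree_cubic_distinct)+
qed

lemma delta_nonzero: "irreducible gQ \<Longrightarrow> \<delta> \<noteq> 0"
  using squares_distinct by (simp add: \<delta>_def)

lemma squares_not_Rats:
  assumes irr: "irreducible gQ" and a: "a \<in> {a1, a2, a3}"
  shows "a \<notin> \<rat>"
proof
  assume "a \<in> \<rat>"
  then obtain r where r: "a = of_rat r" using Rats_cases by blast
  have "poly (map_poly of_int g) a = 0" using a poly_g by auto
  then have "of_rat (poly gQ r) = (0 :: complex)"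
    by (simp add: r rpoly_of_rat flip: rpoly_of_int_poly)
  then have "[:-r, 1:] dvd gQ" by (simp add: poly_eq_0_iff_dvd)
  then obtain k where k: "gQ = [:-r, 1:] * k" by blast
  then have "k \<noteq> 0" using degree_gQ by auto
  then have "degree k = 2" using k degree_gQ degree_mult_eq[of "[:-r, 1:]" k] by simp
  then show False
    using irreducibleD[OF irr k] \<open>k \<noteq> 0\<close> by (simp add: is_unit_iff_degree)
qed

lemma Rats_square_if_not_irreducible:
  assumes "\<not> irreducible gQ"
  obtains a where "a \<in> {a1, a2, a3}" "a \<in> \<rat>"
proof -
  have "gQ \<noteq> 0" using degree_gQ by auto
  moreover have "\<not> is_unit gQ" using degree_gQ \<open>gQ \<noteq> 0\<close> by (simp add: is_unit_iff_degree)
  ultimately have "\<exists>u v. gQ = u * v \<and> \<not> is_unit u \<and> \<not> is_unit v"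
    using assms by (simp add: irreducible_def)
  then obtain u v where uv: "gQ = u * v" "\<not> is_unit u" "\<not> is_unit v" by blast
  then have "u \<noteq> 0" "v \<noteq> 0" using \<open>gQ \<noteq> 0\<close> by auto
  then have "degree u + degree v = 3" "degree u > 0" "degree v > 0"
    using uv degree_gQ by (simp_all add: degree_mult_eq is_unit_iff_degree)
  then have "degree u = 1 \<or> degree v = 1" by linarith
  moreover have "u dvd gQ" "v dvd gQ" using uv(1) by simp_all
  ultimately obtain w where w: "w dvd gQ" "degree w = 1" by blast
  obtain a b where "w = [:b, a:]" "a \<noteq> 0" using w(2) by (rule degree1_coeffs)
  then have "poly w (- b / a) = 0" by simp
  then have "poly gQ (- b / a) = 0" using w(1) by (auto elim!: dvdE)
  then have "poly (map_poly of_int g) (of_rat (- b / a) :: complex) = 0"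
    by (simp add: rpoly_of_rat flip: rpoly_of_int_poly)
  then have "of_rat (- b / a) \<in> {a1, a2, a3}" using poly_g by auto
  then show ?thesis by (rule that) simp
qed


section \<open>Automorphisms of the splitting field\<close>

definition cycles_squares :: "(complex \<Rightarrow> complex) \<Rightarrow> bool" where
  "cycles_squares \<sigma> \<longleftrightarrow>
     (\<sigma> a1 = a2 \<and> \<sigma> a2 = a3 \<and> \<sigma> a3 = a1) \<or> (\<sigma> a1 = a3 \<and> \<sigma> a2 = a1 \<and> \<sigma> a3 = a2)"

context
  fixes \<sigma> assumes aut: "\<sigma> \<in> field_auts L"
begin

interpretation \<sigma>: field_aut L \<sigma>
  using aut by (rule field_aut_splitting_field)

lemma aut_croots: "x \<in> croots f \<Longrightarrow> \<sigma> x \<in> croots f"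
  using \<sigma>.maps_croots[OF croots_subset_splitting_field] .

lemma aut_squares: "\<sigma> a1 \<in> {a1, a2, a3}" "\<sigma> a2 \<in> {a1, a2, a3}" "\<sigma> a3 \<in> {a1, a2, a3}"
proof -
  have "\<sigma> (x^2) \<in> {a1, a2, a3}" if "x \<in> croots f" for x
  proof -
    have "\<sigma> (x^2) = (\<sigma> x)^2"
      using that croots_subset_splitting_field by (blast intro: \<sigma>.hom_power)
    moreover have "\<sigma> x \<in> {b1, -b1, b2, -b2, b3, -b3}" using aut_croots[OF that] by (simp add: croots_f)
    ultimately show ?thesis by (auto simp: a1_def a2_def a3_def)
  qed
  then show "\<sigma> a1 \<in> {a1, a2, a3}" "\<sigma> a2 \<in> {a1, a2, a3}" "\<sigma> a3 \<in> {a1, a2, a3}"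
    by (auto simp: croots_f a1_def a2_def a3_def)
qed

lemma aut_e: "\<sigma> e = e \<or> \<sigma> e = - e"
proof -
  have "(\<sigma> e)^2 = \<sigma> (- of_int c)"
    using in_splitting_field by (simp flip: \<sigma>.hom_power e_squared)
  also have "\<dots> = e^2"
    using csubfield_splitting_field by (simp add: e_squared \<sigma>.hom_uminus csubfield_of_int)
  finally show ?thesis by (simp add: power2_eq_iff)
qed

lemma aut_delta: "\<sigma> \<delta> = (\<sigma> a1 - \<sigma> a2) * (\<sigma> a2 - \<sigma> a3) * (\<sigma> a3 - \<sigma> a1)"
  unfolding \<delta>_def using in_splitting_field csubfield_splitting_field
  by (simp add: \<sigma>.hom_mult \<sigma>.hom_diff csubfield_closed)

lemma aut_croots_sign:
  assumes fixed: "\<sigma> a1 = a1" "\<sigma> a2 = a2" "\<sigma> a3 = a3" and x: "x \<in> croots f"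
  shows "\<sigma> x = x \<or> \<sigma> x = - x"
proof -
  have "\<sigma> b = b \<or> \<sigma> b = - b" if "b \<in> L" "\<sigma> (b^2) = b^2" for b
    using that by (simp add: \<sigma>.hom_power power2_eq_iff)
  then have "\<sigma> b1 = b1 \<or> \<sigma> b1 = - b1" "\<sigma> b2 = b2 \<or> \<sigma> b2 = - b2" "\<sigma> b3 = b3 \<or> \<sigma> b3 = - b3"
    using in_splitting_field fixed by (simp_all add: a1_def a2_def a3_def)
  then show ?thesis using x in_splitting_field by (auto simp: croots_f \<sigma>.hom_uminus)
qed

text \<open>An automorphism fixing all \<open>a\<^sub>i\<close> changes the signs of the \<open>b\<^sub>i\<close>; fixing \<open>e = -b\<^sub>1b\<^sub>2b\<^sub>3\<close>
  and \<open>b\<^sub>1 + b\<^sub>2 + b\<^sub>3 = -n/e\<close> it cannot change any of them.\<close>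

lemma aut_eq_one:
  assumes distinct: "a1 \<noteq> a2" "a1 \<noteq> a3" "a2 \<noteq> a3"
    and fixed: "\<sigma> e = e" "\<sigma> a1 = a1" "\<sigma> a2 = a2" "\<sigma> a3 = a3"
  shows "\<sigma> = \<one>\<^bsub>G\<^esub>"
proof -
  have K: "is_csubfield L" by (rule csubfield_splitting_field)
  have signs: "\<sigma> b1 = b1 \<or> \<sigma> b1 = - b1" "\<sigma> b2 = b2 \<or> \<sigma> b2 = - b2" "\<sigma> b3 = b3 \<or> \<sigma> b3 = - b3"
    using aut_croots_sign[OF fixed(2-4)] by (simp_all add: croots_f)
  have "\<sigma> (- e) = - e" using in_splitting_field fixed(1) by (simp add: \<sigma>.hom_uminus)
  then have prod: "\<sigma> b1 * \<sigma> b2 * \<sigma> b3 = b1 * b2 * b3"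
    using in_splitting_field K by (simp add: e_def \<sigma>.hom_mult csubfield_closed)
  have "\<sigma> b1 + \<sigma> b2 + \<sigma> b3 = \<sigma> (b1 + b2 + b3)"
    using in_splitting_field K by (simp add: \<sigma>.hom_add csubfield_closed)
  also have "\<dots> = \<sigma> (- of_int n / e)" by (simp only: sum_roots)
  also have "\<dots> = b1 + b2 + b3"
    using in_splitting_field K fixed(1)
    by (simp add: sum_roots \<sigma>.hom_divide \<sigma>.hom_uminus csubfield_closed)
  finally have sum: "\<sigma> b1 + \<sigma> b2 + \<sigma> b3 = b1 + b2 + b3" .
  have "b1 * b2 * b3 \<noteq> 0" "b1 + b2 \<noteq> 0" "b1 + b3 \<noteq> 0" "b2 + b3 \<noteq> 0"
    using b_nonzero distinct by (auto simp: a1_def a2_def a3_def eq_neg_iff_add_eq_0 [symmetric])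
  then have "\<sigma> b1 = b1 \<and> \<sigma> b2 = b2 \<and> \<sigma> b3 = b3"
    using signs prod sum by (intro sign_changes_trivial)
  then have "\<sigma> x = x" if "x \<in> croots f" for x
    using that in_splitting_field by (auto simp: croots_f \<sigma>.hom_uminus)
  then show ?thesis using aut by (intro galois_group_eq_oneI) (simp_all add: carrier_galois_group)
qed

lemma aut_fixes_squares_if_fixes_delta:
  assumes "\<delta> \<noteq> 0" "\<sigma> \<delta> = \<delta>" and "\<sigma> a1 = a1 \<or> \<sigma> a2 = a2 \<or> \<sigma> a3 = a3"
  shows "\<sigma> a1 = a1 \<and> \<sigma> a2 = a2 \<and> \<sigma> a3 = a3"
proof -
  have "\<sigma> a1 \<noteq> \<sigma> a2" "\<sigma> a1 \<noteq> \<sigma> a3" "\<sigma> a2 \<noteq> \<sigma> a3"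
    using assms(1) in_splitting_field \<sigma>.inj by (auto simp: \<delta>_def dest: inj_onD)
  moreover have "(a1 - a3) * (a3 - a2) * (a2 - a1) \<noteq> \<delta>"
    "(a3 - a2) * (a2 - a1) * (a1 - a3) \<noteq> \<delta>" "(a2 - a1) * (a1 - a3) * (a3 - a2) \<noteq> \<delta>"
    using assms(1) neg_eq_self_iff[of \<delta>] by (simp_all add: \<delta>_def algebra_simps)
  ultimately show ?thesis
    using assms(2,3) aut_squares aut_delta by auto
qed

lemma aut_twice_fixes_squares:
  assumes "\<sigma> a1 = a1 \<or> \<sigma> a2 = a2 \<or> \<sigma> a3 = a3"
  shows "\<sigma> (\<sigma> a1) = a1 \<and> \<sigma> (\<sigma> a2) = a2 \<and> \<sigma> (\<sigma> a3) = a3"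
proof -
  have sub: "{a1, a2, a3} \<subseteq> L" using in_splitting_field by auto
  have img: "\<sigma> ` {a1, a2, a3} \<subseteq> {a1, a2, a3}" using aut_squares by auto
  note three = inj_on_three_fixpoint[OF \<sigma>.inj]
  consider "\<sigma> a1 = a1" | "\<sigma> a2 = a2" | "\<sigma> a3 = a3" using assms by blast
  then show ?thesis
  proof cases
    case 1
    then show ?thesis using three[OF sub img 1] by simp
  next
    case 2
    then show ?thesis using three[of a2 a1 a3] sub img by (simp add: insert_commute)
  next
    case 3
    then show ?thesis using three[of a3 a1 a2] sub img by (simp add: insert_commute)
  qed
qed

lemma cycles_squares_if_no_fixed_square:
  assumes "a1 \<noteq> a2" "a1 \<noteq> a3" "a2 \<noteq> a3" "\<sigma> a1 \<noteq> a1" "\<sigma> a2 \<noteq> a2" "\<sigma> a3 \<noteq> a3"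
  shows "cycles_squares \<sigma>"
  unfolding cycles_squares_def
  using inj_on_three_no_fixpoint[OF \<sigma>.inj in_splitting_field(5-7) assms(1-3) aut_squares assms(4-6)] .

lemma cycles_squares_fixes_delta: "cycles_squares \<sigma> \<Longrightarrow> \<sigma> \<delta> = \<delta>"
  unfolding cycles_squares_def by (elim disjE; simp add: aut_delta; simp add: \<delta>_def mult_ac)

lemma funpow_e: "\<sigma> e = - e \<Longrightarrow> (\<sigma> ^^ j) e = (if even j then e else - e)"
  using in_splitting_field by (induction j) (auto simp: \<sigma>.hom_uminus)

lemma funpow_squares:
  assumes "cycles_squares \<sigma>" "a \<in> {a1, a2, a3}"
  shows "(\<sigma> ^^ (3 * k)) a = a"
proof -
  have "(\<sigma> ^^ 3) a = a" if "a \<in> {a1, a2, a3}" for a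
    using assms(1) that by (auto simp: cycles_squares_def eval_nat_numeral)
  then show ?thesis
    using assms(2) by (induction k) (auto simp: funpow_add)
qed

lemma funpow_a1_eq_iff:
  assumes "cycles_squares \<sigma>" "a1 \<noteq> a2" "a1 \<noteq> a3"
  shows "(\<sigma> ^^ j) a1 = a1 \<longleftrightarrow> 3 dvd j"
proof -
  have "(\<sigma> ^^ j) a1 = (\<sigma> ^^ (j mod 3 + 3 * (j div 3))) a1" by simp
  also have "\<dots> = (\<sigma> ^^ (j mod 3)) ((\<sigma> ^^ (3 * (j div 3))) a1)" by (simp only: funpow_add o_apply)
  also have "\<dots> = (\<sigma> ^^ (j mod 3)) a1" using funpow_squares[OF assms(1)] by simp
  finally have eq: "(\<sigma> ^^ j) a1 = (\<sigma> ^^ (j mod 3)) a1" .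
  have moved: "\<sigma> a1 \<noteq> a1" "\<sigma> (\<sigma> a1) \<noteq> a1" using assms by (auto simp: cycles_squares_def)
  consider "j mod 3 = 0" | "j mod 3 = 1" | "j mod 3 = 2" by arith
  then show ?thesis using eq moved by cases (simp_all add: dvd_eq_mod_eq_0 numeral_2_eq_2)
qed

end


section \<open>Elements fixed by all automorphisms\<close>

lemma other_squares_in_csubfield:
  assumes irr: "irreducible gQ" and K: "is_csubfield K" and a1: "a1 \<in> K" and \<delta>: "\<delta> \<in> K"
  shows "a2 \<in> K" "a3 \<in> K"
proof -
  define s t where "s = a1 + a2 + a3" and "t = a1 * a2 + a1 * a3 + a2 * a3"
  have s: "s \<in> K" and t: "t \<in> K"
    using K by (simp_all only: s_def t_def sum_squares sum_products_squares csubfield_of_int)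
  have "(a1 - a2) * (a1 - a3) = 3 * a1^2 - 2 * s * a1 + t"
    by (simp add: s_def t_def algebra_simps power2_eq_square)
  moreover have "3 * a1^2 - 2 * s * a1 + t \<in> K" using K a1 s t by (simp add: csubfield_closed)
  moreover have "a2 - a3 = - \<delta> / ((a1 - a2) * (a1 - a3))"
  proof -
    have "\<delta> = - (a2 - a3) * ((a1 - a2) * (a1 - a3))" unfolding \<delta>_def by algebra
    then show ?thesis using squares_distinct[OF irr] by simp
  qed
  ultimately have diff: "a2 - a3 \<in> K" using K \<delta> by (simp add: csubfield_closed)
  have "(s - a1 + (a2 - a3)) / 2 \<in> K" using K s a1 diff by (simp add: csubfield_closed)
  moreover have "(s - a1 + (a2 - a3)) / 2 = a2" by (simp add: s_def field_simps)
  ultimately show a2: "a2 \<in> K" by simp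
  have "a2 - (a2 - a3) \<in> K" by (rule csubfield_diff[OF K a2 diff])
  then show "a3 \<in> K" by simp
qed

lemma croots_subset_csubfield:
  assumes irr: "irreducible gQ" and K: "is_csubfield K" and b1: "b1 \<in> K" and \<delta>: "\<delta> \<in> K"
  shows "croots f \<subseteq> K"
proof -
  have a1: "a1 \<in> K" using K b1 by (simp add: a1_def csubfield_power)
  then have a2: "a2 \<in> K" and a3: "a3 \<in> K" using other_squares_in_csubfield[OF irr K _ \<delta>] by auto
  have "a1 - of_int m \<noteq> 0" using squares_not_Rats[OF irr, of a1] by auto
  then have "e = (of_int c - of_int n * a1) / (b1 * (a1 - of_int m))"
    using e_times b_nonzero by (simp add: field_simps)
  then have e: "e \<in> K" using K a1 b1 by (simp add: csubfield_closed)
  have "b2 + b3 = (b1 + b2 + b3) - b1" by simp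
  also have "\<dots> = - of_int n / e - b1" by (simp only: sum_roots)
  finally have plus: "b2 + b3 \<in> K" using K e b1 by (simp add: csubfield_closed)
  have "b2 + b3 \<noteq> 0" using squares_distinct[OF irr] by (auto simp: a2_def a3_def eq_neg_iff_add_eq_0 [symmetric])
  then have "b2 - b3 = (a2 - a3) / (b2 + b3)"
    by (simp add: a2_def a3_def field_simps power2_eq_square)
  then have minus: "b2 - b3 \<in> K" using K plus a2 a3 by (simp add: csubfield_closed)
  have "(b2 + b3 + (b2 - b3)) / 2 \<in> K"
    by (rule csubfield_divide[OF K csubfield_add[OF K plus minus] csubfield_numeral[OF K]])
  moreover have "(b2 + b3 + (b2 - b3)) / 2 = b2" by (simp add: field_simps)
  ultimately have b2: "b2 \<in> K" by simp
  have "b2 - (b2 - b3) \<in> K" by (rule csubfield_diff[OF K b2 minus])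
  then have "b3 \<in> K" by simp
  then show ?thesis using K b1 b2 by (auto simp: croots_f csubfield_uminus)
qed

lemma exists_primitive_element:
  assumes irr: "irreducible gQ"
  obtains \<theta> p where "primitive_element \<theta> p f"
proof -
  have "\<delta> \<noteq> 0" using delta_nonzero[OF irr] .
  obtain D where D: "\<delta>^2 = of_rat D" using delta_squared_Rats by (auto elim: Rats_cases)
  have "inj (\<lambda>k::nat. b1 + 2 * (of_nat k * \<delta>))" using \<open>\<delta> \<noteq> 0\<close> by (auto intro: inj_onI)
  then have "\<not> range (\<lambda>k::nat. b1 + 2 * (of_nat k * \<delta>)) \<subseteq> croots f"
    using finite_croots[OF f_nonzero] finite_imageD finite_subset by blast
  then obtain k :: nat where k: "b1 + 2 * (of_nat k * \<delta>) \<notin> croots f" by auto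
  define y where "y = of_nat k * \<delta>"
  let ?P = "map_poly (of_int :: int \<Rightarrow> rat) f"
  have "b1 \<in> croots f" by (simp add: croots_f)
  then have "rpoly ?P b1 = 0" by (simp add: croots_def rpoly_of_int_poly)
  moreover have "rpoly ?P (b1 + 2 * y) \<noteq> 0" using k by (simp add: y_def croots_def rpoly_of_int_poly)
  moreover have "y^2 = of_rat (of_nat k ^ 2 * D)" by (simp add: y_def power_mult_distrib D of_rat_mult of_rat_power)
  ultimately obtain p where p: "irreducible p" "rpoly p (b1 + y) = 0"
    and b1: "b1 \<in> rat_adjoin (b1 + y)" and y: "y \<in> rat_adjoin (b1 + y)"
    using primitive_element_quadratic[of ?P b1 y] f_nonzero by (auto simp: map_poly_eq_0_iff)
  have K: "is_csubfield (rat_adjoin (b1 + y))" using p by (rule csubfield_rat_adjoin)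
  have "k \<noteq> 0" using k croots_f by auto
  then have "\<delta> = y / of_nat k" by (simp add: y_def)
  then have "\<delta> \<in> rat_adjoin (b1 + y)" using K y by (simp add: csubfield_closed csubfield_of_int[of _ "int k", simplified])
  then have "croots f \<subseteq> rat_adjoin (b1 + y)" using croots_subset_csubfield[OF irr K b1] by blast
  moreover have "b1 + y \<in> L"
    using in_splitting_field csubfield_splitting_field
    by (simp add: y_def csubfield_closed csubfield_of_int[of _ "int k", simplified])
  ultimately show ?thesis
    using that p f_nonzero by (simp add: primitive_element_def)
qed

lemma fixed_imp_Rats:
  assumes "irreducible gQ" "x \<in> L" "\<And>\<sigma>. \<sigma> \<in> field_auts L \<Longrightarrow> \<sigma> x = x"
  shows "x \<in> \<rat>"
proof -
  obtain \<theta> p where "primitive_element \<theta> p f" using exists_primitive_element[OF assms(1)] .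
  then show ?thesis using assms(2,3) by (rule primitive_element.fixed_imp_Rats)
qed

lemma e_Rats_iff: "e \<in> \<rat> \<longleftrightarrow> (\<exists>k. - c = k^2)"
proof
  assume "e \<in> \<rat>"
  then show "\<exists>k. - c = k^2" using e_squared int_square_if_Rats_sqrt[of e "- c"] by simp
next
  assume "\<exists>k. - c = k^2"
  then obtain k where "e^2 = (of_int k)^2" using e_squared by (metis of_int_minus of_int_power)
  then show "e \<in> \<rat>" by (auto simp: power2_eq_iff)
qed

lemma delta_Rats_iff:
  assumes "irreducible gQ"
  shows "\<delta> \<in> \<rat> \<longleftrightarrow> (\<exists>k. d = k^2)"
proof
  have "of_int m * of_int n - of_int c \<noteq> (0 :: complex)"
    using delta_squared delta_nonzero[OF assms] c_nonzero by auto
  then have d: "of_int d = (\<delta> * of_int c / (of_int m * of_int n - of_int c))^2"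
    using delta_squared by (simp add: power_divide power_mult_distrib field_simps)
  assume "\<delta> \<in> \<rat>"
  then show "\<exists>k. d = k^2" using int_square_if_Rats_sqrt[OF _ d[symmetric]] by simp
next
  assume "\<exists>k. d = k^2"
  then obtain k where "(\<delta> * of_int c)^2 = (of_int k * (of_int m * of_int n - of_int c))^2"
    using delta_squared by (auto simp: power_mult_distrib)
  then have "\<delta> * of_int c \<in> \<rat>" by (auto simp: power2_eq_iff)
  moreover have "\<delta> = \<delta> * of_int c / of_int c" using c_nonzero by simp
  ultimately show "\<delta> \<in> \<rat>" by (metis Rats_divide Rats_of_int)
qed


section \<open>The Galois group is cyclic of order six\<close>

lemma aut_pow_eq_one_iff:
  assumes \<sigma>: "\<sigma> \<in> carrier G" and distinct: "a1 \<noteq> a2" "a1 \<noteq> a3" "a2 \<noteq> a3"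
    and e: "\<sigma> e = - e" and cycles: "cycles_squares \<sigma>"
  shows "\<sigma> [^]\<^bsub>G\<^esub> (j :: nat) = \<one>\<^bsub>G\<^esub> \<longleftrightarrow> 6 dvd j"
proof -
  interpret grp: group G by (rule group_galois_group)
  have aut: "\<sigma> \<in> field_auts L" using \<sigma> by (simp add: carrier_galois_group)
  have pow: "(\<sigma> [^]\<^bsub>G\<^esub> j) x = (\<sigma> ^^ j) x" if "x \<in> L" for x
    using galois_group_pow_apply[OF \<sigma> that] .
  have "(\<sigma> ^^ j) e = e \<longleftrightarrow> even j"
    using funpow_e[OF aut e] e_nonzero neg_eq_self_iff[of e] by auto
  moreover have "(\<sigma> ^^ j) a1 = a1 \<longleftrightarrow> 3 dvd j" by (rule funpow_a1_eq_iff[OF aut cycles distinct(1,2)])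
  ultimately have iff: "(\<sigma> ^^ j) e = e \<and> (\<sigma> ^^ j) a1 = a1 \<longleftrightarrow> 6 dvd j" by presburger
  show ?thesis
  proof
    assume "\<sigma> [^]\<^bsub>G\<^esub> j = \<one>\<^bsub>G\<^esub>"
    then show "6 dvd j"
      using iff pow in_splitting_field by (simp add: galois_group_one_apply)
  next
    assume "6 dvd j"
    then have "3 dvd j" by presburger
    then obtain k where k: "j = 3 * k" by (elim dvdE)
    have "\<sigma> [^]\<^bsub>G\<^esub> j \<in> field_auts L"
      using \<sigma> grp.nat_pow_closed by (simp add: carrier_galois_group)
    moreover have "(\<sigma> [^]\<^bsub>G\<^esub> j) e = e"
      using iff \<open>6 dvd j\<close> pow in_splitting_field by simp
    moreover have "(\<sigma> [^]\<^bsub>G\<^esub> j) a = a" if "a \<in> {a1, a2, a3}" for a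
      using that pow in_splitting_field funpow_squares[OF aut cycles that] k by auto
    ultimately show "\<sigma> [^]\<^bsub>G\<^esub> j = \<one>\<^bsub>G\<^esub>" using distinct by (intro aut_eq_one) auto
  qed
qed

text \<open>An automorphism fixing all \<open>a\<^sub>i\<close> only changes signs of roots, so it equals its cube.\<close>

lemma aut_eq_one_if_cube_eq_one:
  assumes \<tau>: "\<tau> \<in> carrier G" and fixed: "\<tau> a1 = a1" "\<tau> a2 = a2" "\<tau> a3 = a3"
    and cube: "\<tau> [^]\<^bsub>G\<^esub> (3::nat) = \<one>\<^bsub>G\<^esub>"
  shows "\<tau> = \<one>\<^bsub>G\<^esub>"
proof (rule galois_group_eq_oneI[OF \<tau>], rule ccontr)
  fix x assume x: "x \<in> croots f" and "\<tau> x \<noteq> x"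
  have aut: "\<tau> \<in> field_auts L" using \<tau> by (simp add: carrier_galois_group)
  interpret \<tau>: field_aut L \<tau> using aut by (rule field_aut_splitting_field)
  have "\<tau> x = - x" using aut_croots_sign[OF aut fixed x] \<open>\<tau> x \<noteq> x\<close> by blast
  moreover have xL: "x \<in> L" using x croots_subset_splitting_field by blast
  ultimately have "(\<tau> [^]\<^bsub>G\<^esub> (3::nat)) x = - x"
    using galois_group_pow_apply[OF \<tau> xL, of 3] by (simp add: eval_nat_numeral \<tau>.hom_uminus)
  then have "x = - x" using cube xL by (simp add: galois_group_one_apply)
  then show False using x b_nonzero by (auto simp: croots_f)
qed

lemma moves_squares_if_order_6:
  assumes \<sigma>: "\<sigma> \<in> carrier G" and "\<sigma> [^]\<^bsub>G\<^esub> (2::nat) \<noteq> \<one>\<^bsub>G\<^esub>" "\<sigma> [^]\<^bsub>G\<^esub> (6::nat) = \<one>\<^bsub>G\<^esub>"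
  shows "\<sigma> a1 \<noteq> a1" "\<sigma> a2 \<noteq> a2" "\<sigma> a3 \<noteq> a3"
proof -
  interpret grp: group G by (rule group_galois_group)
  define \<tau> where "\<tau> = \<sigma> [^]\<^bsub>G\<^esub> (2::nat)"
  have \<tau>: "\<tau> \<in> carrier G" by (simp add: \<tau>_def \<sigma>)
  have "\<tau> \<noteq> \<one>\<^bsub>G\<^esub>" using assms(2) by (simp add: \<tau>_def)
  moreover have "\<tau> = \<one>\<^bsub>G\<^esub>" if "\<sigma> a1 = a1 \<or> \<sigma> a2 = a2 \<or> \<sigma> a3 = a3"
  proof (rule aut_eq_one_if_cube_eq_one[OF \<tau>])
    have "\<tau> x = \<sigma> (\<sigma> x)" if "x \<in> L" for x
      using galois_group_pow_apply[OF \<sigma> that, of 2] by (simp add: \<tau>_def numeral_2_eq_2)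
    then show "\<tau> a1 = a1" "\<tau> a2 = a2" "\<tau> a3 = a3"
      using aut_twice_fixes_squares[OF _ that] \<sigma> in_splitting_field
      by (simp_all add: carrier_galois_group)
    show "\<tau> [^]\<^bsub>G\<^esub> (3::nat) = \<one>\<^bsub>G\<^esub>"
      using assms(3) \<sigma> by (simp add: \<tau>_def grp.nat_pow_pow)
  qed
  ultimately show "\<sigma> a1 \<noteq> a1" "\<sigma> a2 \<noteq> a2" "\<sigma> a3 \<noteq> a3" by blast+
qed

text \<open>When \<open>\<delta>\<close> is rational, an automorphism is determined by its values at \<open>e\<close> and \<open>a\<^sub>1\<close>.\<close>

lemma card_galois_group_le_6:
  assumes irr: "irreducible gQ" and \<delta>: "\<delta> \<in> \<rat>"
  shows "finite (carrier G)" "card (carrier G) \<le> 6"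
proof -
  interpret grp: group G by (rule group_galois_group)
  define F where "F \<sigma> = (\<sigma> e, \<sigma> a1)" for \<sigma> :: "complex \<Rightarrow> complex"
  have inj: "inj_on F (carrier G)"
  proof
    fix \<sigma>1 \<sigma>2 assume \<sigma>1: "\<sigma>1 \<in> carrier G" and \<sigma>2: "\<sigma>2 \<in> carrier G" and eq: "F \<sigma>1 = F \<sigma>2"
    define \<tau> where "\<tau> = inv\<^bsub>G\<^esub> \<sigma>2 \<otimes>\<^bsub>G\<^esub> \<sigma>1"
    have \<tau>: "\<tau> \<in> field_auts L" using \<sigma>1 \<sigma>2 by (simp add: \<tau>_def flip: carrier_galois_group)
    have inv: "(inv\<^bsub>G\<^esub> \<sigma>2) (\<sigma>2 y) = y" if "y \<in> L" for y
      using galois_group_mult_apply[OF that, of "inv\<^bsub>G\<^esub> \<sigma>2" \<sigma>2] \<sigma>2 that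
      by (simp add: galois_group_one_apply)
    have "\<tau> e = e" "\<tau> a1 = a1"
      using eq inv in_splitting_field by (simp_all add: F_def \<tau>_def galois_group_mult_apply)
    moreover have "\<tau> \<delta> = \<delta>" using field_aut.fixes_Rats[OF field_aut_splitting_field[OF \<tau>] \<delta>] .
    ultimately have "\<tau> a1 = a1 \<and> \<tau> a2 = a2 \<and> \<tau> a3 = a3"
      using aut_fixes_squares_if_fixes_delta[OF \<tau> delta_nonzero[OF irr]] by blast
    then have "\<tau> = \<one>\<^bsub>G\<^esub>" using aut_eq_one[OF \<tau> squares_distinct[OF irr] \<open>\<tau> e = e\<close>] by blast
    then have "inv\<^bsub>G\<^esub> \<sigma>1 = inv\<^bsub>G\<^esub> \<sigma>2"
      using \<sigma>1 \<sigma>2 grp.inv_equality[of "inv\<^bsub>G\<^esub> \<sigma>2" \<sigma>1] by (simp add: \<tau>_def)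
    then show "\<sigma>1 = \<sigma>2" using \<sigma>1 \<sigma>2 by (metis grp.inv_inv)
  qed
  have img: "F ` carrier G \<subseteq> {e, - e} \<times> {a1, a2, a3}"
    using aut_e aut_squares by (auto simp: F_def carrier_galois_group)
  have fin: "finite ({e, - e} \<times> {a1, a2, a3})" by simp
  show "finite (carrier G)" using finite_imageD[OF finite_subset[OF img fin] inj] .
  have "card ({e, - e} \<times> {a1, a2, a3}) = card {e, - e} * card {a1, a2, a3}"
    by (rule card_cartesian_product)
  also have "\<dots> \<le> 2 * 3"
    using card_length[of "[e, - e]"] card_length[of "[a1, a2, a3]"] by (intro mult_le_mono) simp_all
  finally have "card ({e, - e} \<times> {a1, a2, a3}) \<le> 6" by simp
  moreover have "card (carrier G) \<le> card ({e, - e} \<times> {a1, a2, a3})"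
    using card_inj_on_le[OF inj img fin] .
  ultimately show "card (carrier G) \<le> 6" by linarith
qed


lemma exists_aut_negating_e_moving_a1:
  assumes irr: "irreducible gQ" and \<delta>: "\<delta> \<in> \<rat>" and e: "e \<notin> \<rat>"
  obtains \<sigma> where "\<sigma> \<in> field_auts L" "\<sigma> e = - e" "\<sigma> a1 \<noteq> a1"
proof -
  obtain \<tau> where \<tau>: "\<tau> \<in> field_auts L" "\<tau> e \<noteq> e"
    using fixed_imp_Rats[OF irr in_splitting_field(4)] e by blast
  then have \<tau>_e: "\<tau> e = - e" using aut_e by blast
  obtain \<rho> where \<rho>: "\<rho> \<in> field_auts L" "\<rho> a1 \<noteq> a1"
    using fixed_imp_Rats[OF irr in_splitting_field(5)] squares_not_Rats[OF irr, of a1] by blast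
  show ?thesis
  proof (cases "\<tau> a1 = a1")
    case False
    then show ?thesis using that \<tau> \<tau>_e by blast
  next
    case True
    have "\<tau> \<delta> = \<delta>" using field_aut.fixes_Rats[OF field_aut_splitting_field[OF \<tau>(1)] \<delta>] .
    then have \<tau>_squares: "\<tau> a1 = a1" "\<tau> a2 = a2" "\<tau> a3 = a3"
      using aut_fixes_squares_if_fixes_delta[OF \<tau>(1) delta_nonzero[OF irr]] True by blast+
    show ?thesis
    proof (cases "\<rho> e = e")
      case False
      then show ?thesis using that \<rho> aut_e[OF \<rho>(1)] by blast
    next
      case True
      text \<open>Then \<open>\<tau> \<circ> \<rho>\<close> negates \<open>e\<close> and moves \<open>a\<^sub>1\<close>.\<close>
      have "\<rho> a1 \<in> {a1, a2, a3}" using aut_squares[OF \<rho>(1)] by simp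
      then have "\<tau> (\<rho> a1) = \<rho> a1" using \<tau>_squares by auto
      then have "(\<tau> \<otimes>\<^bsub>G\<^esub> \<rho>) a1 \<noteq> a1"
        using \<rho> in_splitting_field by (simp add: galois_group_mult_apply)
      moreover have "(\<tau> \<otimes>\<^bsub>G\<^esub> \<rho>) e = - e"
        using True \<tau>_e in_splitting_field by (simp add: galois_group_mult_apply)
      moreover have "\<tau> \<otimes>\<^bsub>G\<^esub> \<rho> \<in> field_auts L"
        using \<tau>(1) \<rho>(1) field_auts_compose by (simp add: mult_galois_group)
      ultimately show ?thesis using that by blast
    qed
  qed
qed

lemma exists_aut_negating_e:
  assumes irr: "irreducible gQ" and \<delta>: "\<delta> \<in> \<rat>" and e: "e \<notin> \<rat>"
  obtains \<sigma> where "\<sigma> \<in> carrier G" "\<sigma> e = - e" "cycles_squares \<sigma>"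
proof -
  obtain \<sigma> where \<sigma>: "\<sigma> \<in> field_auts L" "\<sigma> e = - e" "\<sigma> a1 \<noteq> a1"
    using exists_aut_negating_e_moving_a1[OF assms] .
  have "\<sigma> \<delta> = \<delta>" using field_aut.fixes_Rats[OF field_aut_splitting_field[OF \<sigma>(1)] \<delta>] .
  then have "\<sigma> a1 \<noteq> a1" "\<sigma> a2 \<noteq> a2" "\<sigma> a3 \<noteq> a3"
    using aut_fixes_squares_if_fixes_delta[OF \<sigma>(1) delta_nonzero[OF irr]] \<sigma>(3) by blast+
  then have "cycles_squares \<sigma>"
    using squares_distinct[OF irr] by (intro cycles_squares_if_no_fixed_square[OF \<sigma>(1)])
  then show ?thesis using that \<sigma> by (simp add: carrier_galois_group)
qed

lemma conditions_if_iso_C6: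
  assumes "G \<cong> integer_mod_group 6"
  shows "\<not> (\<exists>k. - c = k^2)" "irreducible gQ" "\<exists>k. d = k^2"
proof -
  interpret grp: group G by (rule group_galois_group)
  obtain \<sigma> where \<sigma>: "\<sigma> \<in> carrier G" and ord: "\<And>j::nat. \<sigma> [^]\<^bsub>G\<^esub> j = \<one>\<^bsub>G\<^esub> \<longleftrightarrow> 6 dvd j"
    and gen: "carrier G = (\<lambda>j. \<sigma> [^]\<^bsub>G\<^esub> j) ` {..<6::nat}"
    using grp.iso_integer_mod_groupD[OF assms] by auto
  have aut: "\<sigma> \<in> field_auts L" using \<sigma> by (simp add: carrier_galois_group)
  have moved: "\<sigma> a1 \<noteq> a1" "\<sigma> a2 \<noteq> a2" "\<sigma> a3 \<noteq> a3"
    using moves_squares_if_order_6[OF \<sigma>] ord[of 2] ord[of 6] by simp_all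
  show irr: "irreducible gQ"
  proof (rule ccontr)
    assume "\<not> irreducible gQ"
    then obtain a where "a \<in> {a1, a2, a3}" "a \<in> \<rat>" by (rule Rats_square_if_not_irreducible)
    then show False using moved field_aut.fixes_Rats[OF field_aut_splitting_field[OF aut]] by auto
  qed
  have distinct: "a1 \<noteq> a2" "a1 \<noteq> a3" "a2 \<noteq> a3" using squares_distinct[OF irr] .
  have cycles: "cycles_squares \<sigma>" by (rule cycles_squares_if_no_fixed_square[OF aut distinct moved])
  show "\<not> (\<exists>k. - c = k^2)"
  proof
    assume "\<exists>k. - c = k^2"
    then have "e \<in> \<rat>" by (simp add: e_Rats_iff)
    define \<tau> where "\<tau> = \<sigma> [^]\<^bsub>G\<^esub> (3::nat)"
    have \<tau>: "\<tau> \<in> field_auts L" using \<sigma> by (simp add: \<tau>_def flip: carrier_galois_group)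
    have "\<tau> a = a" if "a \<in> {a1, a2, a3}" for a
      using that funpow_squares[OF aut cycles that, of 1] galois_group_pow_apply[OF \<sigma>] in_splitting_field
      by (auto simp: \<tau>_def)
    moreover have "\<tau> e = e" using field_aut.fixes_Rats[OF field_aut_splitting_field[OF \<tau>] \<open>e \<in> \<rat>\<close>] .
    ultimately have "\<tau> = \<one>\<^bsub>G\<^esub>" using aut_eq_one[OF \<tau> distinct] by simp
    then show False using ord[of 3] by (simp add: \<tau>_def)
  qed
  have "(\<sigma> ^^ j) \<delta> = \<delta>" for j
    using cycles_squares_fixes_delta[OF aut cycles] by (induction j) simp_all
  then have "\<tau> \<delta> = \<delta>" if "\<tau> \<in> field_auts L" for \<tau>
    using that gen galois_group_pow_apply[OF \<sigma> in_splitting_field(8)]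
    by (auto simp: carrier_galois_group[symmetric])
  then have "\<delta> \<in> \<rat>" by (rule fixed_imp_Rats[OF irr in_splitting_field(8)])
  then show "\<exists>k. d = k^2" using delta_Rats_iff[OF irr] by simp
qed

lemma iso_C6_if_conditions:
  assumes "\<not> (\<exists>k. - c = k^2)" "irreducible gQ" "\<exists>k. d = k^2"
  shows "G \<cong> integer_mod_group 6"
proof -
  interpret grp: group G by (rule group_galois_group)
  have \<delta>: "\<delta> \<in> \<rat>" using delta_Rats_iff[OF assms(2)] assms(3) by simp
  have "e \<notin> \<rat>" using e_Rats_iff assms(1) by simp
  then obtain \<sigma> where \<sigma>: "\<sigma> \<in> carrier G" "\<sigma> e = - e" "cycles_squares \<sigma>"
    using exists_aut_negating_e[OF assms(2) \<delta>] by blast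
  show ?thesis
    using card_galois_group_le_6[OF assms(2) \<delta>] \<sigma>(1)
      aut_pow_eq_one_iff[OF \<sigma>(1) squares_distinct[OF assms(2)] \<sigma>(2,3)]
    by (intro grp.iso_integer_mod_groupI)
qed

end

theorem lemma2p4:
  fixes m n c :: int
  assumes "c \<noteq> 0" and "c dvd n ^ 2"
  defines "f \<equiv> [:c, 0, m ^ 2 - 2 * n, 0, n ^ 2 div c - 2 * m, 0, 1:]"
      and "g \<equiv> [:c, m ^ 2 - 2 * n, n ^ 2 div c - 2 * m, 1:]"
      and "d \<equiv> - (4 * m ^ 3 * c - m ^ 2 * n ^ 2 - 18 * m * n * c + 4 * n ^ 3 + 27 * c ^ 2)"
  shows "galois_group f \<cong> integer_mod_group 6 \<longleftrightarrow>
           (\<not> (\<exists>k::int. - c = k ^ 2)) \<and>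
           irreducible (map_poly (of_int :: int \<Rightarrow> rat) g) \<and>
           (\<exists>k::int. d = k ^ 2)"
proof -
  obtain b1 b2 b3 where sextic: "sextic m n c b1 b2 b3"
    using sextic_parametrisation[OF assms(1), of m n] assms(1,2) by (metis sextic.intro)
  have eqs: "f = sextic.f m n c" "g = sextic.g m n c" "d = sextic.d m n c"
    by (simp_all add: f_def g_def d_def sextic.f_def[OF sextic] sextic.g_def[OF sextic]
        sextic.d_def[OF sextic])
  show ?thesis unfolding eqs
    using sextic.conditions_if_iso_C6[OF sextic] sextic.iso_C6_if_conditions[OF sextic] by blast
qed

end
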